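(* Let $n\ge1$ and $n'=\lfloor n/2\rfloor$. The ring $R_n$ is generated as an $R'_n$-module by the set $\{h_{i_1}\cdots h_{i_{n'}}\mid i_1,\dots,i_{n'}\in\mathbb Z_{\ge0}\}$.
   Context: $R_n=\mathbb C[x_1,\dots,x_n]^{S_n}$; $e_k$ and $h_k$ denote the elementary and complete homogeneous symmetric polynomials in $x_1,\dots,x_n$ ($h_0=1$). $R'_n=\mathbb C[e_{2j+1}\mid 0\le j\le (n-1)/2]\subset R_n$. *)

theory Defs
  imports Complex_Main "HOL-Library.Poly_Mapping" "HOL-Combinatorics.Permutations"
begin

text \<open>Variables are indexed 0, ..., n-1 (x_1..x_n of the paper).\<close>

type_synonym mpoly = "(nat \<Rightarrow>\<^sub>0 nat) \<Rightarrow>\<^sub>0 complex"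

definition Var :: "nat \<Rightarrow> mpoly" where
  "Var i = Poly_Mapping.single (Poly_Mapping.single i 1) 1"

definition Const :: "complex \<Rightarrow> mpoly" where
  "Const c = Poly_Mapping.single 0 c"

definition in_vars :: "nat \<Rightarrow> mpoly \<Rightarrow> bool" where
  "in_vars n p \<longleftrightarrow> (\<forall>m \<in> Poly_Mapping.keys p. Poly_Mapping.keys m \<subseteq> {..<n})"

definition Rsym :: "nat \<Rightarrow> mpoly set" where
  "Rsym n = {p. in_vars n p \<and>
     (\<forall>\<sigma>. \<sigma> permutes {..<n} \<longrightarrow>
        (\<forall>m. Poly_Mapping.lookup p (Poly_Mapping.map_key \<sigma> m) = Poly_Mapping.lookup p m))}"

definition elem_sym :: "nat \<Rightarrow> nat \<Rightarrow> mpoly" where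
  "elem_sym n k = (\<Sum>S \<in> {S. S \<subseteq> {..<n} \<and> card S = k}. \<Prod>i\<in>S. Var i)"

definition compl_sym :: "nat \<Rightarrow> nat \<Rightarrow> mpoly" where
  "compl_sym n k = (\<Sum>m \<in> {m. Poly_Mapping.keys m \<subseteq> {..<n} \<and>
        (\<Sum>i<n. Poly_Mapping.lookup m i) = k}. Poly_Mapping.single m 1)"

inductive_set subalg :: "mpoly set \<Rightarrow> mpoly set" for G where
  const: "Const c \<in> subalg G"
| gen: "g \<in> G \<Longrightarrow> g \<in> subalg G"
| add: "p \<in> subalg G \<Longrightarrow> q \<in> subalg G \<Longrightarrow> p + q \<in> subalg G"
| mult: "p \<in> subalg G \<Longrightarrow> q \<in> subalg G \<Longrightarrow> p * q \<in> subalg G"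

definition Rodd :: "nat \<Rightarrow> mpoly set" where
  "Rodd n = subalg {elem_sym n (2*j+1) | j. 2*j+1 \<le> n}"

definition module_span :: "mpoly set \<Rightarrow> mpoly set \<Rightarrow> mpoly set" where
  "module_span A M = {(\<Sum>i\<in>F. r i * g i) | F r g.
      finite (F :: nat set) \<and> (\<forall>i\<in>F. r i \<in> A \<and> g i \<in> M)}"

end

theory Submission
  imports Defs
begin

text \<open>
  Let \<open>I\<close> be the ideal of \<open>R\<^sub>n\<close> generated by the odd \<open>e\<^sub>k\<close>, and \<open>W\<close> the sum of \<open>I\<close> and the
  \<open>\<complex>\<close>-span of the products of \<open>n' = n div 2\<close> complete symmetric polynomials. Comparing
  coefficients gives \<open>\<Sum>\<^sub>k (-1)\<^sup>k e\<^sub>k h\<^sub>N\<^sub>-\<^sub>k = 0\<close> for \<open>N \<ge> 1\<close>; modulo \<open>I\<close> this means \<open>h\<^sub>N \<in> I\<close> for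
  odd \<open>N\<close> and \<open>\<Sum>\<^sub>t e\<^sub>2\<^sub>t h\<^sub>2\<^sub>A\<^sub>-\<^sub>2\<^sub>t \<in> I\<close>.

  Write \<open>G\<^sub>a = \<Prod>\<^sub>l\<^sub><\<^sub>n\<^sub>' h\<^sub>2\<^sub>a\<^sub>l\<close> and let \<open>y\<^sub>l\<close> act on families indexed by exponent vectors \<open>a\<close>
  by lowering \<open>a\<^sub>l\<close>. The second relation, used in the \<open>l\<close>-th factor of \<open>G\<^sub>a\<close>, says that
  \<open>\<Sum>\<^sub>j\<^sub>\<ge>\<^sub>1 y\<^sub>l\<^sup>j u\<^sub>j\<close> takes values in \<open>W\<close> for the families \<open>u\<^sub>j(a) = e\<^sub>2\<^sub>j G\<^sub>a\<close>. Since there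
  are \<open>n'\<close> operators \<open>y\<^sub>l\<close> and each \<open>y\<^sub>l - y\<^sub>l\<^sub>'\<close> can be cancelled modulo \<open>W\<close>, a Vandermonde
  argument shows that every \<open>u\<^sub>j\<close> takes values in \<open>W\<close>: \<open>W\<close> is stable under the even \<open>e\<^sub>2\<^sub>j\<close>,
  so it contains all monomials in them.

  Finally a symmetric polynomial is reduced by the monomial in the \<open>e\<^sub>k\<close> with the same
  lexicographically leading term. That monomial either is \<open>e\<^sub>k\<close>, \<open>k\<close> odd, times one of lower
  degree, or lies in \<open>W\<close>, whose homogeneous parts lie in the \<open>R'\<^sub>n\<close>-span of the products by
  induction on the degree.
\<close>

abbreviation lookup :: "('a \<Rightarrow>\<^sub>0 'b::zero) \<Rightarrow> 'a \<Rightarrow> 'b" where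
  "lookup \<equiv> Poly_Mapping.lookup"

abbreviation keys :: "('a \<Rightarrow>\<^sub>0 'b::zero) \<Rightarrow> 'a set" where
  "keys \<equiv> Poly_Mapping.keys"

abbreviation single :: "'a \<Rightarrow> 'b::zero \<Rightarrow> 'a \<Rightarrow>\<^sub>0 'b" where
  "single \<equiv> Poly_Mapping.single"

abbreviation map_key :: "('a \<Rightarrow> 'b) \<Rightarrow> ('b \<Rightarrow>\<^sub>0 'c::zero) \<Rightarrow> 'a \<Rightarrow>\<^sub>0 'c" where
  "map_key \<equiv> Poly_Mapping.map_key"

type_synonym monom = "nat \<Rightarrow>\<^sub>0 nat"

lemma poly_mapping_sum_single:
  "(p :: 'a \<Rightarrow>\<^sub>0 'b::comm_monoid_add) = (\<Sum>\<gamma>\<in>keys p. single \<gamma> (lookup p \<gamma>))"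
proof (rule poly_mapping_eqI)
  fix k show "lookup p k = lookup (\<Sum>\<gamma>\<in>keys p. single \<gamma> (lookup p \<gamma>)) k"
    by (cases "k \<in> keys p") (auto simp: lookup_sum lookup_single when_def in_keys_iff)
qed

lemma mpoly_mult_expand:
  "(p::mpoly) * q = (\<Sum>\<alpha>\<in>keys p. \<Sum>\<beta>\<in>keys q. single (\<alpha> + \<beta>) (lookup p \<alpha> * lookup q \<beta>))"
proof -
  have "p * q = (\<Sum>\<alpha>\<in>keys p. single \<alpha> (lookup p \<alpha>)) * (\<Sum>\<beta>\<in>keys q. single \<beta> (lookup q \<beta>))"
    by (simp only: poly_mapping_sum_single[symmetric])
  then show ?thesis
    by (simp add: sum_product mult_single)
qed

lemma lookup_mpoly_mult:
  "lookup ((p::mpoly) * q) \<gamma> =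
     (\<Sum>\<alpha>\<in>keys p. \<Sum>\<beta>\<in>keys q. (lookup p \<alpha> * lookup q \<beta> when \<alpha> + \<beta> = \<gamma>))"
  by (subst mpoly_mult_expand) (simp add: lookup_sum lookup_single)

lemma lookup_mpoly_mult_superset:
  assumes "finite A" "keys p \<subseteq> A" "finite B" "keys q \<subseteq> B"
  shows "lookup ((p::mpoly) * q) \<gamma> = (\<Sum>a\<in>A. \<Sum>b\<in>B. (lookup p a * lookup q b when a + b = \<gamma>))"
  unfolding lookup_mpoly_mult
  by (intro sum.mono_neutral_left sum.mono_neutral_cong_left ballI)
    (use assms in \<open>auto simp: in_keys_iff\<close>)

lemma keys_mpoly_mult_obtains:
  assumes "\<gamma> \<in> keys ((p::mpoly) * q)"
  obtains a b where "\<gamma> = a + b" "a \<in> keys p" "b \<in> keys q"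
  using keys_mult[of p q] assms by auto

lemma Const_0 [simp]: "Const 0 = 0"
  by (simp add: Const_def)

lemma Const_1 [simp]: "Const 1 = 1"
  by (simp add: Const_def)

lemma Const_add: "Const (a + b) = Const a + Const b"
  by (simp add: Const_def single_add)

lemma Const_mult: "Const (a * b) = Const a * Const b"
  by (simp add: Const_def mult_single)

lemma Const_minus: "Const (- a) = - Const a"
  by (simp add: Const_def single_uminus)

lemma lookup_Const_mult: "lookup (Const c * p) \<gamma> = c * lookup p \<gamma>"
  by (cases "\<gamma> \<in> keys p")
    (auto simp: lookup_mpoly_mult Const_def when_def sum.delta in_keys_iff)

lemma keys_Const_mult: "keys (Const c * p) \<subseteq> keys p"
  by (auto simp: in_keys_iff lookup_Const_mult)

lemma uminus_eq_Const_mult: "- (p::mpoly) = Const (-1) * p"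
  by (rule poly_mapping_eqI) (simp add: lookup_Const_mult)

lemma Var_power: "Var i ^ j = single (single i j) 1"
  by (induction j) (simp_all add: Var_def mult_single flip: single_add)

lemma prod_single_mpoly:
  "finite S \<Longrightarrow> (\<Prod>i\<in>S. single (f i) (c i) :: mpoly) = single (\<Sum>i\<in>S. f i) (\<Prod>i\<in>S. c i)"
  by (induction S rule: finite_induct) (simp_all add: mult_single)

definition deg_monom :: "monom \<Rightarrow> nat" where
  "deg_monom \<gamma> = sum (lookup \<gamma>) (keys \<gamma>)"

lemma deg_monom_superset:
  "finite A \<Longrightarrow> keys \<gamma> \<subseteq> A \<Longrightarrow> deg_monom \<gamma> = sum (lookup \<gamma>) A"
  unfolding deg_monom_def by (rule sum.mono_neutral_left) (auto simp: in_keys_iff)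

lemma deg_monom_add: "deg_monom (a + b) = deg_monom a + deg_monom b"
proof -
  have fin: "finite (keys a \<union> keys b)" by simp
  have "deg_monom (a + b) = sum (lookup (a + b)) (keys a \<union> keys b)"
    using keys_add[of a b] by (intro deg_monom_superset[OF fin])
  also have "\<dots> = sum (lookup a) (keys a \<union> keys b) + sum (lookup b) (keys a \<union> keys b)"
    by (simp add: lookup_add sum.distrib)
  also have "\<dots> = deg_monom a + deg_monom b"
    using deg_monom_superset[OF fin, of a] deg_monom_superset[OF fin, of b] by auto
  finally show ?thesis .
qed

lemma deg_monom_zero [simp]: "deg_monom 0 = 0"
  by (simp add: deg_monom_def)

lemma deg_monom_eq_0_iff [simp]: "deg_monom \<gamma> = 0 \<longleftrightarrow> \<gamma> = 0"
  by (auto simp: deg_monom_def in_keys_iff simp flip: keys_eq_empty)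

lemma lookup_le_deg_monom: "lookup \<gamma> i \<le> deg_monom \<gamma>"
  by (cases "i \<in> keys \<gamma>") (auto simp: deg_monom_def in_keys_iff intro: member_le_sum)

lemma card_keys_le_deg_monom: "card (keys \<gamma>) \<le> deg_monom \<gamma>"
  unfolding deg_monom_def card_eq_sum by (intro sum_mono) (simp add: in_keys_iff)

lemma lookup_eq_1_if_le_1:
  fixes \<gamma> :: monom
  assumes "\<forall>i. lookup \<gamma> i \<le> 1" "i \<in> keys \<gamma>"
  shows "lookup \<gamma> i = 1"
  using assms(1)[rule_format, of i] assms(2) unfolding in_keys_iff by linarith

lemma deg_monom_eq_card_keys: "\<forall>i. lookup \<gamma> i \<le> 1 \<Longrightarrow> deg_monom \<gamma> = card (keys \<gamma>)"
  unfolding deg_monom_def card_eq_sum by (intro sum.cong) (auto simp: lookup_eq_1_if_le_1)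

lemma finite_bounded_degree_monoms:
  assumes "finite A"
  shows "finite {\<gamma>::monom. keys \<gamma> \<subseteq> A \<and> deg_monom \<gamma> \<le> D}"
proof -
  have "lookup ` {\<gamma>::monom. keys \<gamma> \<subseteq> A \<and> deg_monom \<gamma> \<le> D} \<subseteq>
      {f. \<forall>x. (x \<in> A \<longrightarrow> f x \<in> {..D}) \<and> (x \<notin> A \<longrightarrow> f x = 0)}"
  proof (rule image_subsetI)
    fix \<gamma> :: monom assume "\<gamma> \<in> {\<gamma>. keys \<gamma> \<subseteq> A \<and> deg_monom \<gamma> \<le> D}"
    then show "lookup \<gamma> \<in> {f. \<forall>x. (x \<in> A \<longrightarrow> f x \<in> {..D}) \<and> (x \<notin> A \<longrightarrow> f x = 0)}"
      using lookup_le_deg_monom[of \<gamma>] by (auto simp: in_keys_iff intro: le_trans)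
  qed
  moreover have "finite {f. \<forall>x. (x \<in> A \<longrightarrow> f x \<in> {..D}) \<and> (x \<notin> A \<longrightarrow> f x = (0::nat))}"
    by (rule finite_set_of_finite_funs) (use assms in auto)
  ultimately have "finite (lookup ` {\<gamma>::monom. keys \<gamma> \<subseteq> A \<and> deg_monom \<gamma> \<le> D})"
    by (rule finite_subset)
  moreover have "inj (lookup :: monom \<Rightarrow> _)"
    by (rule injI) (rule poly_mapping_eqI, simp)
  ultimately show ?thesis
    by (rule finite_imageD[OF _ inj_on_subset]) auto
qed

definition monom_of_set :: "nat set \<Rightarrow> monom" where
  "monom_of_set S = (\<Sum>i\<in>S. single i 1)"

lemma lookup_monom_of_set: "finite S \<Longrightarrow> lookup (monom_of_set S) i = (if i \<in> S then 1 else 0)"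
  by (simp add: monom_of_set_def lookup_sum lookup_single when_def)

lemma keys_monom_of_set: "finite S \<Longrightarrow> keys (monom_of_set S) = S"
  by (auto simp: in_keys_iff lookup_monom_of_set split: if_splits)

lemma deg_monom_of_set: "finite S \<Longrightarrow> deg_monom (monom_of_set S) = card S"
  by (simp add: deg_monom_def keys_monom_of_set lookup_monom_of_set)

lemma monom_of_set_eq_iff:
  assumes "finite S"
  shows "monom_of_set S = \<gamma> \<longleftrightarrow> S = keys \<gamma> \<and> (\<forall>i. lookup \<gamma> i \<le> 1)"
proof
  assume S: "S = keys \<gamma> \<and> (\<forall>i. lookup \<gamma> i \<le> 1)"
  show "monom_of_set S = \<gamma>"
  proof (rule poly_mapping_eqI)
    fix i
    show "lookup (monom_of_set S) i = lookup \<gamma> i"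
      using S lookup_eq_1_if_le_1[of \<gamma> i] assms by (simp add: lookup_monom_of_set in_keys_iff)
  qed
qed (use assms in \<open>auto simp: keys_monom_of_set lookup_monom_of_set\<close>)

definition card_subsets :: "nat \<Rightarrow> nat \<Rightarrow> nat set set" where
  "card_subsets n k = {S. S \<subseteq> {..<n} \<and> card S = k}"

lemma finite_card_subsets: "finite (card_subsets n k)"
  unfolding card_subsets_def by (rule finite_subset[of _ "Pow {..<n}"]) auto

lemma finite_card_subsets_member: "S \<in> card_subsets n k \<Longrightarrow> finite S"
  unfolding card_subsets_def using finite_subset by blast

lemma elem_sym_eq: "elem_sym n k = (\<Sum>S\<in>card_subsets n k. single (monom_of_set S) 1)"
  unfolding elem_sym_def card_subsets_def[symmetric]
  by (intro sum.cong refl)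
    (simp add: Var_def prod_single_mpoly monom_of_set_def finite_card_subsets_member)

lemma lookup_elem_sym:
  "lookup (elem_sym n k) \<gamma> =
     (1 when keys \<gamma> \<subseteq> {..<n} \<and> deg_monom \<gamma> = k \<and> (\<forall>i. lookup \<gamma> i \<le> 1))"
proof -
  define P where "P \<longleftrightarrow> (\<forall>i. lookup \<gamma> i \<le> (1::nat))"
  have "lookup (elem_sym n k) \<gamma> = (\<Sum>S\<in>card_subsets n k. (1 when monom_of_set S = \<gamma>))"
    by (simp add: elem_sym_eq lookup_sum lookup_single)
  also have "\<dots> = (\<Sum>S\<in>card_subsets n k. (1 when S = keys \<gamma> \<and> P))"
    by (intro sum.cong refl) (simp add: P_def monom_of_set_eq_iff finite_card_subsets_member)
  also have "\<dots> = (1 when keys \<gamma> \<in> card_subsets n k \<and> P)"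
    using finite_card_subsets by (cases P) (simp_all add: when_def sum.delta')
  also have "\<dots> = (1 when keys \<gamma> \<subseteq> {..<n} \<and> deg_monom \<gamma> = k \<and> P)"
    using deg_monom_eq_card_keys[of \<gamma>, folded P_def]
    by (cases P) (simp_all add: card_subsets_def)
  finally show ?thesis
    by (simp only: P_def)
qed

lemma elem_sym_0: "elem_sym n 0 = 1"
proof -
  have "S = {}" if "S \<subseteq> {..<n}" "card S = 0" for S
    using that card_0_eq[of S] finite_subset[of S "{..<n}"] by auto
  then have "card_subsets n 0 = {{}}"
    by (auto simp: card_subsets_def)
  then show ?thesis
    by (simp add: elem_sym_eq monom_of_set_def)
qed

lemma elem_sym_eq_0: "n < k \<Longrightarrow> elem_sym n k = 0"
proof -
  assume "n < k"
  have "k \<le> n" if "S \<subseteq> {..<n}" "card S = k" for S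
    using that card_mono[of "{..<n}" S] by simp
  with \<open>n < k\<close> have "card_subsets n k = {}"
    by (auto simp: card_subsets_def)
  then show ?thesis
    by (simp add: elem_sym_eq)
qed

definition monoms_of_degree :: "nat \<Rightarrow> nat \<Rightarrow> monom set" where
  "monoms_of_degree n k = {m. keys m \<subseteq> {..<n} \<and> deg_monom m = k}"

lemma finite_monoms_of_degree: "finite (monoms_of_degree n k)"
  unfolding monoms_of_degree_def
  by (rule finite_subset[OF _ finite_bounded_degree_monoms[of "{..<n}" k]]) auto

lemma compl_sym_eq: "compl_sym n k = (\<Sum>\<mu>\<in>monoms_of_degree n k. single \<mu> 1)"
  unfolding compl_sym_def monoms_of_degree_def
  using deg_monom_superset[of "{..<n}"] by (intro sum.cong) auto

lemma lookup_compl_sym: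
  "lookup (compl_sym n k) \<gamma> = (1 when keys \<gamma> \<subseteq> {..<n} \<and> deg_monom \<gamma> = k)"
  using finite_monoms_of_degree[of n k]
  by (simp add: compl_sym_eq lookup_sum lookup_single when_def monoms_of_degree_def)

lemma compl_sym_0: "compl_sym n 0 = 1"
  by (rule poly_mapping_eqI) (simp add: lookup_compl_sym lookup_one when_def)

definition symmetric :: "nat \<Rightarrow> mpoly \<Rightarrow> bool" where
  "symmetric n p \<longleftrightarrow>
     (\<forall>\<sigma>. \<sigma> permutes {..<n} \<longrightarrow> (\<forall>m. lookup p (map_key \<sigma> m) = lookup p m))"

lemma Rsym_iff: "p \<in> Rsym n \<longleftrightarrow> in_vars n p \<and> symmetric n p"
  by (simp add: Rsym_def symmetric_def)

context
  fixes \<sigma> :: "nat \<Rightarrow> nat" and A :: "nat set"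
  assumes perm: "\<sigma> permutes A"
begin

lemma lookup_map_key_permutes: "lookup (map_key \<sigma> \<gamma>) i = lookup \<gamma> (\<sigma> i)"
  by (simp add: map_key.rep_eq[OF permutes_inj[OF perm]])

lemma inj_map_key_permutes: "inj (map_key \<sigma> :: (nat \<Rightarrow>\<^sub>0 'b::zero) \<Rightarrow> _)"
proof (rule injI)
  fix x y :: "nat \<Rightarrow>\<^sub>0 'b" assume "map_key \<sigma> x = map_key \<sigma> y"
  then have "lookup x (\<sigma> i) = lookup y (\<sigma> i)" for i
    by (metis lookup_map_key_permutes)
  then show "x = y"
    by (metis poly_mapping_eqI permutes_inverses(1)[OF perm])
qed

lemma map_key_add_permutes: "map_key \<sigma> (a + b) = map_key \<sigma> a + map_key \<sigma> (b :: monom)"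
  by (rule poly_mapping_eqI) (simp add: lookup_map_key_permutes lookup_add)

lemma map_key_inv_permutes: "map_key \<sigma> (map_key (inv \<sigma>) (a :: monom)) = a"
  by (rule poly_mapping_eqI)
    (simp add: map_key.rep_eq permutes_inj[OF perm] permutes_inj[OF permutes_inv[OF perm]]
      permutes_inverses[OF perm])

lemma map_key_eq_0_iff: "map_key \<sigma> (\<gamma>::monom) = 0 \<longleftrightarrow> \<gamma> = 0"
proof -
  have "map_key \<sigma> (0::monom) = 0"
    by (rule poly_mapping_eqI) (simp add: lookup_map_key_permutes)
  then show ?thesis
    using inj_map_key_permutes by (metis injD)
qed

lemma lookup_map_key_le_1_iff: "(\<forall>i. lookup (map_key \<sigma> \<gamma>) i \<le> (1::nat)) \<longleftrightarrow> (\<forall>i. lookup \<gamma> i \<le> 1)"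
  unfolding lookup_map_key_permutes by (metis permutes_inverses(1)[OF perm])

end

context
  fixes \<sigma> :: "nat \<Rightarrow> nat" and n :: nat
  assumes perm: "\<sigma> permutes {..<n}"
begin

lemma keys_map_key_subset_iff: "keys (map_key \<sigma> (\<gamma> :: monom)) \<subseteq> {..<n} \<longleftrightarrow> keys \<gamma> \<subseteq> {..<n}"
proof
  assume sub: "keys (map_key \<sigma> \<gamma>) \<subseteq> {..<n}"
  show "keys \<gamma> \<subseteq> {..<n}"
  proof
    fix j assume "j \<in> keys \<gamma>"
    then have "inv \<sigma> j \<in> keys (map_key \<sigma> \<gamma>)"
      by (simp add: in_keys_iff lookup_map_key_permutes[OF perm] permutes_inverses[OF perm])
    then show "j \<in> {..<n}"
      using sub permutes_in_image[OF permutes_inv[OF perm]] by blast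
  qed
next
  assume sub: "keys \<gamma> \<subseteq> {..<n}"
  show "keys (map_key \<sigma> \<gamma>) \<subseteq> {..<n}"
  proof
    fix j assume "j \<in> keys (map_key \<sigma> \<gamma>)"
    then have "\<sigma> j \<in> keys \<gamma>"
      by (simp add: in_keys_iff lookup_map_key_permutes[OF perm])
    then show "j \<in> {..<n}"
      using sub permutes_in_image[OF perm] by blast
  qed
qed

lemma deg_monom_map_key:
  assumes "keys \<gamma> \<subseteq> {..<n}"
  shows "deg_monom (map_key \<sigma> \<gamma>) = deg_monom \<gamma>"
proof -
  have "keys (map_key \<sigma> \<gamma>) \<subseteq> {..<n}"
    using keys_map_key_subset_iff assms by blast
  then have "deg_monom (map_key \<sigma> \<gamma>) = (\<Sum>i<n. lookup \<gamma> (\<sigma> i))"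
    using deg_monom_superset[OF finite_lessThan] by (simp add: lookup_map_key_permutes[OF perm])
  also have "\<dots> = (\<Sum>i<n. lookup \<gamma> i)"
    using sum.permute[OF perm, of "lookup \<gamma>"] by (simp add: comp_def)
  also have "\<dots> = deg_monom \<gamma>"
    using deg_monom_superset[OF _ assms] by simp
  finally show ?thesis .
qed

end

lemma symmetric_elem_sym: "symmetric n (elem_sym n k)"
  unfolding symmetric_def lookup_elem_sym
proof (intro allI impI)
  fix \<sigma> :: "nat \<Rightarrow> nat" and \<gamma> :: monom assume \<sigma>: "\<sigma> permutes {..<n}"
  show "(1 when keys (map_key \<sigma> \<gamma>) \<subseteq> {..<n} \<and> deg_monom (map_key \<sigma> \<gamma>) = k \<and>
           (\<forall>i. lookup (map_key \<sigma> \<gamma>) i \<le> 1)) =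
        (1 when keys \<gamma> \<subseteq> {..<n} \<and> deg_monom \<gamma> = k \<and> (\<forall>i. lookup \<gamma> i \<le> 1))"
    using keys_map_key_subset_iff[OF \<sigma>, of \<gamma>] deg_monom_map_key[OF \<sigma>, of \<gamma>]
      lookup_map_key_le_1_iff[OF \<sigma>, of \<gamma>]
    by (cases "keys \<gamma> \<subseteq> {..<n}") (simp_all only: simp_thms)
qed

lemma symmetric_compl_sym: "symmetric n (compl_sym n k)"
  unfolding symmetric_def lookup_compl_sym
proof (intro allI impI)
  fix \<sigma> :: "nat \<Rightarrow> nat" and \<gamma> :: monom assume \<sigma>: "\<sigma> permutes {..<n}"
  show "(1 when keys (map_key \<sigma> \<gamma>) \<subseteq> {..<n} \<and> deg_monom (map_key \<sigma> \<gamma>) = k) =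
        (1 when keys \<gamma> \<subseteq> {..<n} \<and> deg_monom \<gamma> = k)"
    using keys_map_key_subset_iff[OF \<sigma>, of \<gamma>] deg_monom_map_key[OF \<sigma>, of \<gamma>]
    by (cases "keys \<gamma> \<subseteq> {..<n}") (simp_all only: simp_thms)
qed

lemma symmetric_add: "symmetric n p \<Longrightarrow> symmetric n q \<Longrightarrow> symmetric n (p + q)"
  by (simp add: symmetric_def lookup_add)

lemma symmetric_diff: "symmetric n p \<Longrightarrow> symmetric n q \<Longrightarrow> symmetric n (p - q)"
  by (simp add: symmetric_def lookup_minus)

lemma symmetric_Const: "symmetric n (Const c)"
  unfolding symmetric_def
proof (intro allI impI)
  fix \<sigma> :: "nat \<Rightarrow> nat" and \<gamma> :: monom assume "\<sigma> permutes {..<n}"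
  then show "lookup (Const c) (map_key \<sigma> \<gamma>) = lookup (Const c) \<gamma>"
    by (simp add: Const_def lookup_single map_key_eq_0_iff eq_commute[of 0])
qed

lemma bij_betw_map_key_keys:
  assumes "symmetric n r" "\<sigma> permutes {..<n}"
  shows "bij_betw (map_key \<sigma>) (keys r) (keys r)"
proof (rule bij_betw_imageI)
  show "inj_on (map_key \<sigma>) (keys r)"
    using inj_map_key_permutes[OF assms(2)] by (rule inj_on_subset) simp
  show "map_key \<sigma> ` keys r = keys r"
  proof
    show "map_key \<sigma> ` keys r \<subseteq> keys r"
      using assms by (auto simp: symmetric_def in_keys_iff)
    show "keys r \<subseteq> map_key \<sigma> ` keys r"
    proof
      fix a assume "a \<in> keys r"
      then have "map_key (inv \<sigma>) a \<in> keys r"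
        using assms permutes_inv[OF assms(2)] by (auto simp: symmetric_def in_keys_iff)
      then show "a \<in> map_key \<sigma> ` keys r"
        using map_key_inv_permutes[OF assms(2), of a] by (metis imageI)
    qed
  qed
qed

lemma sum_keys_map_key:
  assumes "symmetric n r" "\<sigma> permutes {..<n}"
  shows "(\<Sum>\<beta>\<in>keys r. g (map_key \<sigma> \<beta>)) = (\<Sum>\<beta>\<in>keys r. g \<beta>)"
  using sum.reindex_bij_betw[OF bij_betw_map_key_keys[OF assms]] .

lemma symmetric_mult:
  assumes p: "symmetric n p" and q: "symmetric n q"
  shows "symmetric n (p * q)"
  unfolding symmetric_def
proof (intro allI impI)
  fix \<sigma> :: "nat \<Rightarrow> nat" and \<gamma> assume \<sigma>: "\<sigma> permutes {..<n}"
  let ?f = "map_key \<sigma> :: monom \<Rightarrow> monom"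
  define F where "F \<alpha> \<beta> = (lookup p \<alpha> * lookup q \<beta> when \<alpha> + \<beta> = ?f \<gamma>)" for \<alpha> \<beta>
  have "lookup (p * q) (?f \<gamma>) = (\<Sum>\<alpha>\<in>keys p. \<Sum>\<beta>\<in>keys q. F \<alpha> \<beta>)"
    unfolding F_def by (rule lookup_mpoly_mult)
  also have "\<dots> = (\<Sum>\<alpha>\<in>keys p. \<Sum>\<beta>\<in>keys q. F (?f \<alpha>) (?f \<beta>))"
    using sum_keys_map_key[OF p \<sigma>, of "\<lambda>\<alpha>. \<Sum>\<beta>\<in>keys q. F \<alpha> \<beta>"]
      sum_keys_map_key[OF q \<sigma>, of "F (?f \<alpha>)" for \<alpha>]
    by simp
  also have "\<dots> = (\<Sum>\<alpha>\<in>keys p. \<Sum>\<beta>\<in>keys q. (lookup p \<alpha> * lookup q \<beta> when \<alpha> + \<beta> = \<gamma>))"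
    using p q \<sigma>
    by (simp add: F_def symmetric_def map_key_add_permutes[OF \<sigma>, symmetric]
        inj_map_key_permutes[OF \<sigma>, THEN inj_eq])
  also have "\<dots> = lookup (p * q) \<gamma>"
    by (rule lookup_mpoly_mult[symmetric])
  finally show "lookup (p * q) (?f \<gamma>) = lookup (p * q) \<gamma>" .
qed

lemma in_vars_add: "in_vars n p \<Longrightarrow> in_vars n q \<Longrightarrow> in_vars n (p + q)"
  unfolding in_vars_def using keys_add[of p q] by auto

lemma in_vars_diff: "in_vars n p \<Longrightarrow> in_vars n q \<Longrightarrow> in_vars n (p - q)"
  unfolding in_vars_def using keys_add[of p "- q"] by auto

lemma in_vars_mult:
  assumes "in_vars n p" "in_vars n q"
  shows "in_vars n (p * q)"
  unfolding in_vars_def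
proof
  fix \<gamma> assume "\<gamma> \<in> keys (p * q)"
  then obtain a b where "\<gamma> = a + b" "a \<in> keys p" "b \<in> keys q"
    by (rule keys_mpoly_mult_obtains)
  then show "keys \<gamma> \<subseteq> {..<n}"
    using assms keys_add[of a b] unfolding in_vars_def by blast
qed

lemma in_vars_lookup_eq_0: "in_vars n p \<Longrightarrow> \<not> keys \<gamma> \<subseteq> {..<n} \<Longrightarrow> lookup p \<gamma> = 0"
  unfolding in_vars_def by (metis in_keys_iff)

lemma Rsym_add: "p \<in> Rsym n \<Longrightarrow> q \<in> Rsym n \<Longrightarrow> p + q \<in> Rsym n"
  by (simp add: Rsym_iff in_vars_add symmetric_add)

lemma Rsym_diff: "p \<in> Rsym n \<Longrightarrow> q \<in> Rsym n \<Longrightarrow> p - q \<in> Rsym n"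
  by (simp add: Rsym_iff in_vars_diff symmetric_diff)

lemma Rsym_mult: "p \<in> Rsym n \<Longrightarrow> q \<in> Rsym n \<Longrightarrow> p * q \<in> Rsym n"
  by (simp add: Rsym_iff in_vars_mult symmetric_mult)

lemma Rsym_Const: "Const c \<in> Rsym n"
  unfolding Rsym_iff using symmetric_Const by (simp add: in_vars_def Const_def)

lemma Rsym_zero: "0 \<in> Rsym n"
  using Rsym_Const[of 0 n] by simp

lemma Rsym_sum: "(\<And>i. i \<in> A \<Longrightarrow> f i \<in> Rsym n) \<Longrightarrow> (\<Sum>i\<in>A. f i) \<in> Rsym n"
  by (induction A rule: infinite_finite_induct) (simp_all add: Rsym_zero Rsym_add)

lemma Rsym_prod: "(\<And>i. i \<in> A \<Longrightarrow> f i \<in> Rsym n) \<Longrightarrow> (\<Prod>i\<in>A. f i) \<in> Rsym n"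
  by (induction A rule: infinite_finite_induct) (use Rsym_Const[of 1 n] in \<open>simp_all add: Rsym_mult\<close>)

lemma Rsym_power: "p \<in> Rsym n \<Longrightarrow> p ^ k \<in> Rsym n"
  by (induction k) (use Rsym_Const[of 1 n] in \<open>simp_all add: Rsym_mult\<close>)

lemma Rsym_elem_sym: "elem_sym n k \<in> Rsym n"
  by (auto simp: Rsym_iff in_vars_def in_keys_iff lookup_elem_sym symmetric_elem_sym)

lemma Rsym_compl_sym: "compl_sym n k \<in> Rsym n"
  by (auto simp: Rsym_iff in_vars_def in_keys_iff lookup_compl_sym symmetric_compl_sym)

definition homogeneous :: "nat \<Rightarrow> mpoly \<Rightarrow> bool" where
  "homogeneous D p \<longleftrightarrow> (\<forall>\<gamma>\<in>keys p. deg_monom \<gamma> = D)"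

definition degree_le :: "nat \<Rightarrow> mpoly \<Rightarrow> bool" where
  "degree_le D p \<longleftrightarrow> (\<forall>\<gamma>\<in>keys p. deg_monom \<gamma> \<le> D)"

lemma homogeneous_mult: "homogeneous a p \<Longrightarrow> homogeneous b q \<Longrightarrow> homogeneous (a + b) (p * q)"
  unfolding homogeneous_def by (metis keys_mpoly_mult_obtains deg_monom_add)

lemma homogeneous_one: "homogeneous 0 1"
  by (simp add: homogeneous_def)

lemma homogeneous_power: "homogeneous a p \<Longrightarrow> homogeneous (j * a) (p ^ j)"
  by (induction j) (simp_all add: homogeneous_one homogeneous_mult)

lemma homogeneous_prod:
  "finite A \<Longrightarrow> (\<And>i. i \<in> A \<Longrightarrow> homogeneous (a i) (f i)) \<Longrightarrow>
     homogeneous (\<Sum>i\<in>A. a i) (\<Prod>i\<in>A. f i)"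
  by (induction A rule: finite_induct) (simp_all add: homogeneous_one homogeneous_mult)

lemma homogeneous_elem_sym: "homogeneous k (elem_sym n k)"
  by (auto simp: homogeneous_def in_keys_iff lookup_elem_sym when_def split: if_splits)

lemma homogeneous_compl_sym: "homogeneous k (compl_sym n k)"
  by (auto simp: homogeneous_def in_keys_iff lookup_compl_sym when_def split: if_splits)

lemma degree_le_if_homogeneous: "homogeneous D p \<Longrightarrow> D \<le> D' \<Longrightarrow> degree_le D' p"
  unfolding homogeneous_def degree_le_def by simp

lemma degree_le_diff: "degree_le D p \<Longrightarrow> degree_le D q \<Longrightarrow> degree_le D (p - q)"
  unfolding degree_le_def using keys_add[of p "- q"] by auto

lemma degree_le_Const_mult: "degree_le D p \<Longrightarrow> degree_le D (Const c * p)"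
  unfolding degree_le_def using keys_Const_mult by blast

definition homog_part :: "nat \<Rightarrow> mpoly \<Rightarrow> mpoly" where
  "homog_part D p = (\<Sum>\<gamma>\<in>keys p. if deg_monom \<gamma> = D then single \<gamma> (lookup p \<gamma>) else 0)"

lemma lookup_homog_part: "lookup (homog_part D p) \<gamma> = (if deg_monom \<gamma> = D then lookup p \<gamma> else 0)"
proof -
  have "lookup (homog_part D p) \<gamma> =
      (\<Sum>\<gamma>'\<in>keys p. if \<gamma>' = \<gamma> then (if deg_monom \<gamma> = D then lookup p \<gamma> else 0) else 0)"
    unfolding homog_part_def lookup_sum
    by (intro sum.cong refl) (auto simp: lookup_single when_def)
  then show ?thesis
    by (cases "\<gamma> \<in> keys p") (simp_all add: in_keys_iff)
qed

lemma keys_homog_part: "keys (homog_part D p) \<subseteq> keys p"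
  by (auto simp: in_keys_iff lookup_homog_part split: if_splits)

lemma homog_part_add: "homog_part D (p + q) = homog_part D p + homog_part D q"
  by (rule poly_mapping_eqI) (simp add: lookup_homog_part lookup_add)

lemma homog_part_Const_mult: "homog_part D (Const c * p) = Const c * homog_part D p"
  by (rule poly_mapping_eqI) (simp add: lookup_homog_part lookup_Const_mult)

lemma homogeneous_homog_part: "homogeneous D (homog_part D p)"
  by (auto simp: homogeneous_def in_keys_iff lookup_homog_part split: if_splits)

lemma homog_part_homogeneous: "homogeneous E p \<Longrightarrow> homog_part D p = (if E = D then p else 0)"
  by (rule poly_mapping_eqI) (auto simp: lookup_homog_part homogeneous_def in_keys_iff)

lemma homog_part_homogeneous_mult:
  assumes q: "homogeneous k q"
  shows "homog_part D (q * p) = (if k \<le> D then q * homog_part (D - k) p else 0)"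
proof (rule poly_mapping_eqI)
  fix \<gamma>
  have deg: "deg_monom \<gamma> = k + deg_monom b" if "a \<in> keys q" "a + b = \<gamma>" for a b
    using q that by (auto simp: homogeneous_def deg_monom_add)
  show "lookup (homog_part D (q * p)) \<gamma> = lookup (if k \<le> D then q * homog_part (D - k) p else 0) \<gamma>"
  proof (cases "k \<le> D")
    case True
    have "lookup (q * homog_part (D - k) p) \<gamma> =
        (\<Sum>a\<in>keys q. \<Sum>b\<in>keys p. (lookup q a * lookup (homog_part (D - k) p) b when a + b = \<gamma>))"
      using keys_homog_part by (intro lookup_mpoly_mult_superset) auto
    also have "\<dots> = (\<Sum>a\<in>keys q. \<Sum>b\<in>keys p.
        if deg_monom \<gamma> = D then (lookup q a * lookup p b when a + b = \<gamma>) else 0)"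
      using True deg by (intro sum.cong refl) (auto simp: lookup_homog_part when_def)
    also have "\<dots> = lookup (homog_part D (q * p)) \<gamma>"
      by (cases "deg_monom \<gamma> = D") (simp_all add: lookup_homog_part lookup_mpoly_mult)
    finally show ?thesis
      using True by simp
  next
    case False
    have "lookup (q * p) \<gamma> = 0" if "deg_monom \<gamma> = D"
      unfolding lookup_mpoly_mult
      by (intro sum.neutral ballI) (use False that deg in \<open>fastforce simp: when_def\<close>)
    then show ?thesis
      using False by (simp add: lookup_homog_part)
  qed
qed

lemma Rsym_homog_part:
  assumes "p \<in> Rsym n"
  shows "homog_part D p \<in> Rsym n"
proof -
  have vars: "in_vars n p" and sym: "symmetric n p"
    using assms by (auto simp: Rsym_iff)
  have "in_vars n (homog_part D p)"
    using vars by (auto simp: in_vars_def in_keys_iff lookup_homog_part split: if_splits)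
  moreover have "symmetric n (homog_part D p)"
    unfolding symmetric_def
  proof (intro allI impI)
    fix \<sigma> :: "nat \<Rightarrow> nat" and \<gamma> assume \<sigma>: "\<sigma> permutes {..<n}"
    show "lookup (homog_part D p) (map_key \<sigma> \<gamma>) = lookup (homog_part D p) \<gamma>"
    proof (cases "keys \<gamma> \<subseteq> {..<n}")
      case True
      then show ?thesis
        using sym \<sigma> by (simp add: lookup_homog_part deg_monom_map_key symmetric_def)
    next
      case False
      then show ?thesis
        using vars keys_map_key_subset_iff[OF \<sigma>, of \<gamma>]
        by (simp add: lookup_homog_part in_vars_lookup_eq_0)
    qed
  qed
  ultimately show ?thesis
    by (simp add: Rsym_iff)
qed

section \<open>Lexicographically leading terms\<close>

text \<open>The linear order on \<^typ>\<open>monom\<close> is lexicographic, the exponent of the variable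
  with the smallest index being the most significant.\<close>

lemma less_monom_iff:
  "(x :: monom) < y \<longleftrightarrow> (\<exists>k. lookup x k < lookup y k \<and> (\<forall>k'<k. lookup x k' = lookup y k'))"
  by (simp add: less_poly_mapping.rep_eq less_fun_def)

definition lex_lead :: "mpoly \<Rightarrow> monom \<Rightarrow> complex \<Rightarrow> bool" where
  "lex_lead p \<alpha> c \<longleftrightarrow> lookup p \<alpha> = c \<and> c \<noteq> 0 \<and> (\<forall>\<gamma>\<in>keys p. \<gamma> \<le> \<alpha>)"

lemma sum_sum_when_eq_pair:
  assumes "finite A" "finite B" "x \<in> A" "y \<in> B"
  shows "(\<Sum>a\<in>A. \<Sum>b\<in>B. ((f a b :: 'c::comm_monoid_add) when a = x \<and> b = y)) = f x y"
proof -
  have "(\<Sum>b\<in>B. (f a b when a = x \<and> b = y)) = (if a = x then f a y else 0)" for a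
    by (cases "a = x") (simp_all add: when_def sum.delta assms)
  then show ?thesis
    by (simp add: sum.delta assms)
qed

lemma lex_lead_mult:
  assumes p: "lex_lead p \<alpha> c" and q: "lex_lead q \<beta> d"
  shows "lex_lead (p * q) (\<alpha> + \<beta>) (c * d)"
proof -
  have \<alpha>: "\<alpha> \<in> keys p" and \<beta>: "\<beta> \<in> keys q"
    using p q by (auto simp: lex_lead_def in_keys_iff)
  have unique: "a = \<alpha> \<and> b = \<beta>" if "a \<in> keys p" "b \<in> keys q" "a + b = \<alpha> + \<beta>" for a b
  proof -
    have "a \<le> \<alpha>" "b \<le> \<beta>"
      using that p q by (auto simp: lex_lead_def)
    with \<open>a + b = \<alpha> + \<beta>\<close> have "a = \<alpha>"
      by (metis add_le_cancel_left add_less_le_mono nless_le)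
    with \<open>a + b = \<alpha> + \<beta>\<close> show ?thesis
      by simp
  qed
  have "lookup (p * q) (\<alpha> + \<beta>) =
      (\<Sum>a\<in>keys p. \<Sum>b\<in>keys q. (lookup p a * lookup q b when a + b = \<alpha> + \<beta>))"
    by (rule lookup_mpoly_mult)
  also have "\<dots> = (\<Sum>a\<in>keys p. \<Sum>b\<in>keys q. (lookup p a * lookup q b when a = \<alpha> \<and> b = \<beta>))"
    by (intro sum.cong refl when_cong) (use unique in auto)
  also have "\<dots> = c * d"
    using \<alpha> \<beta> p q by (simp add: sum_sum_when_eq_pair lex_lead_def)
  finally have "lookup (p * q) (\<alpha> + \<beta>) = c * d" .
  moreover have "\<gamma> \<le> \<alpha> + \<beta>" if "\<gamma> \<in> keys (p * q)" for \<gamma>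
    using that p q
    by (auto elim!: keys_mpoly_mult_obtains simp: lex_lead_def intro: add_mono)
  ultimately show ?thesis
    using p q by (simp add: lex_lead_def)
qed

lemma lex_lead_one: "lex_lead 1 0 1"
  by (simp add: lex_lead_def)

lemma lex_lead_power: "lex_lead p \<alpha> c \<Longrightarrow> lex_lead (p ^ j) (\<Sum>t<j. \<alpha>) (c ^ j)"
proof (induction j)
  case (Suc j)
  then have "lex_lead (p * p ^ j) (\<alpha> + (\<Sum>t<j. \<alpha>)) (c * c ^ j)"
    by (intro lex_lead_mult)
  then show ?case
    by (simp only: sum.lessThan_Suc add.commute power_Suc)
qed (simp add: lex_lead_one)

lemma lex_lead_prod:
  "finite A \<Longrightarrow> (\<And>i. i \<in> A \<Longrightarrow> lex_lead (f i) (a i) (c i)) \<Longrightarrow>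
     lex_lead (\<Prod>i\<in>A. f i) (\<Sum>i\<in>A. a i) (\<Prod>i\<in>A. c i)"
  by (induction A rule: finite_induct) (simp_all add: lex_lead_one lex_lead_mult)

lemma monom_of_set_le_initial_segment:
  assumes "S \<subseteq> {..<n}" "card S = k"
  shows "monom_of_set S \<le> monom_of_set {..<k}"
proof (cases "{..<k} \<subseteq> S")
  case True
  have "finite S"
    using assms(1) finite_subset by blast
  then have "{..<k} = S"
    using True assms(2) by (intro card_subset_eq) auto
  then show ?thesis by simp
next
  case False
  have fin: "finite S"
    using assms(1) finite_subset by blast
  define i where "i = Min ({..<k} - S)"
  have i: "i \<in> {..<k} - S"
    unfolding i_def by (rule Min_in) (use False in auto)
  have min: "i \<le> j" if "j \<in> {..<k} - S" for j
    unfolding i_def using that by (intro Min_le) auto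
  have "j < k \<and> j \<in> S" if "j < i" for j
  proof
    show "j < k" using that i by simp
    then show "j \<in> S" using that min[of j] by auto
  qed
  then have "monom_of_set S < monom_of_set {..<k}"
    unfolding less_monom_iff using i fin by (intro exI[of _ i]) (auto simp: lookup_monom_of_set)
  then show ?thesis by simp
qed

lemma lex_lead_elem_sym: "k \<le> n \<Longrightarrow> lex_lead (elem_sym n k) (monom_of_set {..<k}) 1"
proof -
  assume "k \<le> n"
  then have "lookup (elem_sym n k) (monom_of_set {..<k}) = 1"
    by (simp add: lookup_elem_sym keys_monom_of_set deg_monom_of_set lookup_monom_of_set)
  moreover have "\<gamma> \<le> monom_of_set {..<k}" if "\<gamma> \<in> keys (elem_sym n k)" for \<gamma>
  proof -
    have \<gamma>: "keys \<gamma> \<subseteq> {..<n}" "deg_monom \<gamma> = k" "\<forall>i. lookup \<gamma> i \<le> 1"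
      using that by (auto simp: in_keys_iff lookup_elem_sym when_def split: if_splits)
    then have "monom_of_set (keys \<gamma>) = \<gamma>"
      by (simp add: monom_of_set_eq_iff)
    then have "\<gamma> = monom_of_set (keys \<gamma>)" ..
    also have "\<dots> \<le> monom_of_set {..<k}"
      using \<gamma> by (intro monom_of_set_le_initial_segment) (auto simp: deg_monom_eq_card_keys)
    finally show ?thesis .
  qed
  ultimately show ?thesis
    by (simp add: lex_lead_def)
qed

lemma lex_lead_symmetric_antimono:
  assumes p: "symmetric n p" and lead: "lex_lead p \<alpha> c" and i: "Suc i < n"
  shows "lookup \<alpha> (Suc i) \<le> lookup \<alpha> i"
proof (rule ccontr)
  assume increase: "\<not> lookup \<alpha> (Suc i) \<le> lookup \<alpha> i"
  define \<sigma> where "\<sigma> = Transposition.transpose i (Suc i)"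
  have \<sigma>: "\<sigma> permutes {..<n}"
    unfolding \<sigma>_def by (rule permutes_swap_id) (use i in auto)
  have "lookup p (map_key \<sigma> \<alpha>) = lookup p \<alpha>"
    using p \<sigma> by (simp add: symmetric_def)
  then have "map_key \<sigma> \<alpha> \<le> \<alpha>"
    using lead by (simp add: lex_lead_def in_keys_iff)
  moreover have "\<alpha> < map_key \<sigma> \<alpha>"
    unfolding less_monom_iff lookup_map_key_permutes[OF \<sigma>]
    using increase by (intro exI[of _ i]) (simp add: \<sigma>_def)
  ultimately show False
    by simp
qed

definition elem_sym_prod :: "nat \<Rightarrow> (nat \<Rightarrow> nat) \<Rightarrow> mpoly" where
  "elem_sym_prod n c = (\<Prod>k\<in>{1..n}. elem_sym n k ^ c k)"

lemma Rsym_elem_sym_prod: "elem_sym_prod n c \<in> Rsym n"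
  unfolding elem_sym_prod_def by (intro Rsym_prod Rsym_power Rsym_elem_sym)

lemma homogeneous_elem_sym_prod: "homogeneous (\<Sum>k\<in>{1..n}. c k * k) (elem_sym_prod n c)"
  unfolding elem_sym_prod_def by (intro homogeneous_prod homogeneous_power homogeneous_elem_sym) simp

lemma lex_lead_elem_sym_prod:
  "lex_lead (elem_sym_prod n c) (\<Sum>k\<in>{1..n}. \<Sum>t<c k. monom_of_set {..<k}) 1"
proof -
  have "lex_lead (elem_sym_prod n c) (\<Sum>k\<in>{1..n}. \<Sum>t<c k. monom_of_set {..<k}) (\<Prod>k\<in>{1..n}. 1 ^ c k)"
    unfolding elem_sym_prod_def by (intro lex_lead_prod lex_lead_power lex_lead_elem_sym) auto
  then show ?thesis by simp
qed

lemma elem_sym_prod_split: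
  assumes "k \<in> {1..n}" "c k = Suc m"
  shows "elem_sym_prod n c = elem_sym n k * elem_sym_prod n (c(k := m))"
proof -
  have "(\<Prod>k'\<in>{1..n} - {k}. elem_sym n k' ^ (c(k := m)) k') = (\<Prod>k'\<in>{1..n} - {k}. elem_sym n k' ^ c k')"
    by (intro prod.cong) auto
  then show ?thesis
    unfolding elem_sym_prod_def using assms by (simp add: prod.remove mult.assoc)
qed

lemma sum_diff_telescope_antimono:
  assumes "\<And>k. f (Suc k) \<le> (f k :: nat)" "i \<le> N"
  shows "(\<Sum>k\<in>{Suc i..N}. f (k - 1) - f k) = f i - f N"
  using assms(2)
proof (induction N)
  case (Suc N)
  show ?case
  proof (cases "i = Suc N")
    case False
    then have "i \<le> N" using Suc.prems by simp
    then show ?thesis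
      using Suc.IH assms(1)[of N] lift_Suc_antimono_le[of f, OF assms(1)]
      by (simp add: sum.cl_ivl_Suc)
  qed simp
qed simp

text \<open>For a partition \<open>\<alpha>\<close>, the product \<open>\<Prod>\<^sub>k e\<^sub>k ^ c\<^sub>k\<close> with these exponents \<open>c\<^sub>k\<close> has leading monomial \<open>\<alpha>\<close>.\<close>

definition elem_exponents :: "monom \<Rightarrow> nat \<Rightarrow> nat" where
  "elem_exponents \<alpha> k = lookup \<alpha> (k - 1) - lookup \<alpha> k"

lemma sum_elem_exponents:
  assumes "keys \<alpha> \<subseteq> {..<n}" "\<And>k. lookup \<alpha> (Suc k) \<le> lookup \<alpha> k"
  shows "(\<Sum>k\<in>{1..n}. \<Sum>t<elem_exponents \<alpha> k. monom_of_set {..<k}) = \<alpha>"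
proof (rule poly_mapping_eqI)
  fix i
  have "lookup (\<Sum>k\<in>{1..n}. \<Sum>t<elem_exponents \<alpha> k. monom_of_set {..<k}) i =
      (\<Sum>k\<in>{1..n}. if i < k then elem_exponents \<alpha> k else 0)"
    by (simp only: lookup_sum) (simp add: lookup_monom_of_set if_distrib[of "\<lambda>x. _ * x"] cong: if_cong)
  also have "\<dots> = lookup \<alpha> i"
  proof (cases "i < n")
    case True
    have "(\<Sum>k\<in>{1..n}. if i < k then elem_exponents \<alpha> k else 0) = (\<Sum>k\<in>{Suc i..n}. elem_exponents \<alpha> k)"
      by (rule sum.mono_neutral_cong_right) auto
    also have "\<dots> = lookup \<alpha> i - lookup \<alpha> n"
      unfolding elem_exponents_def by (rule sum_diff_telescope_antimono) (use assms(2) True in auto)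
    also have "lookup \<alpha> n = 0"
      using assms(1) by (auto simp: in_keys_iff)
    finally show ?thesis by simp
  next
    case False
    then show ?thesis
      using assms(1) by (auto simp: in_keys_iff intro: sum.neutral)
  qed
  finally show "lookup (\<Sum>k\<in>{1..n}. \<Sum>t<elem_exponents \<alpha> k. monom_of_set {..<k}) i = lookup \<alpha> i" .
qed

section \<open>The ideal generated by the odd elementary symmetric polynomials\<close>

definition monom_le :: "monom \<Rightarrow> monom \<Rightarrow> bool" where
  "monom_le a b \<longleftrightarrow> (\<forall>i. lookup a i \<le> lookup b i)"

lemma lookup_minus_monom: "lookup ((a::monom) - b) i = lookup a i - lookup b i"
  by (simp add: lookup_minus)

lemma keys_add_monom: "keys ((a::monom) + b) = keys a \<union> keys b"
  by (auto simp: in_keys_iff lookup_add)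

lemma add_eq_iff_monom_le: "(a::monom) + \<mu> = \<gamma> \<longleftrightarrow> monom_le a \<gamma> \<and> \<mu> = \<gamma> - a"
proof
  assume "a + \<mu> = \<gamma>"
  then show "monom_le a \<gamma> \<and> \<mu> = \<gamma> - a"
    by (auto simp: monom_le_def lookup_add intro!: poly_mapping_eqI simp: lookup_minus_monom)
qed (auto simp: monom_le_def lookup_add lookup_minus_monom intro!: poly_mapping_eqI)

lemma monom_le_monom_of_set_iff: "finite S \<Longrightarrow> monom_le (monom_of_set S) \<gamma> \<longleftrightarrow> S \<subseteq> keys \<gamma>"
  by (auto simp: monom_le_def lookup_monom_of_set in_keys_iff Suc_le_eq)

lemma card_subsets_below_monom:
  assumes "k \<le> N"
  shows "{S \<in> card_subsets n k. monom_le (monom_of_set S) \<gamma> \<and>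
            \<gamma> - monom_of_set S \<in> monoms_of_degree n (N - k)} =
    (if keys \<gamma> \<subseteq> {..<n} \<and> deg_monom \<gamma> = N then {S. S \<subseteq> keys \<gamma> \<and> card S = k} else {})"
proof -
  have "S \<in> card_subsets n k \<and> monom_le (monom_of_set S) \<gamma> \<and>
          \<gamma> - monom_of_set S \<in> monoms_of_degree n (N - k) \<longleftrightarrow>
        keys \<gamma> \<subseteq> {..<n} \<and> deg_monom \<gamma> = N \<and> S \<subseteq> keys \<gamma> \<and> card S = k" for S
  proof (cases "finite S \<and> S \<subseteq> keys \<gamma>")
    case True
    let ?\<mu> = "\<gamma> - monom_of_set S"
    have "monom_le (monom_of_set S) \<gamma>"
      using True by (simp add: monom_le_monom_of_set_iff)
    then have eq: "monom_of_set S + ?\<mu> = \<gamma>"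
      by (simp add: add_eq_iff_monom_le)
    have "keys \<gamma> = S \<union> keys ?\<mu>"
      using arg_cong[OF eq, of keys] True by (simp add: keys_add_monom keys_monom_of_set)
    moreover have "deg_monom \<gamma> = card S + deg_monom ?\<mu>"
      using arg_cong[OF eq, of deg_monom] True by (simp add: deg_monom_add deg_monom_of_set)
    ultimately show ?thesis
      using True \<open>monom_le (monom_of_set S) \<gamma>\<close> assms
      by (auto simp: card_subsets_def monoms_of_degree_def)
  next
    case False
    then have "\<not> S \<subseteq> keys \<gamma>"
      using finite_subset[of S "keys \<gamma>"] by auto
    moreover have "\<not> (S \<in> card_subsets n k \<and> monom_le (monom_of_set S) \<gamma>)"
      using False finite_card_subsets_member monom_le_monom_of_set_iff by blast
    ultimately show ?thesis
      by blast
  qed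
  then show ?thesis
    by auto
qed

lemma lookup_elem_sym_mult_compl_sym:
  assumes "k \<le> N"
  shows "lookup (elem_sym n k * compl_sym n (N - k)) \<gamma> =
    (of_nat (card (keys \<gamma>) choose k) when keys \<gamma> \<subseteq> {..<n} \<and> deg_monom \<gamma> = N)"
proof -
  define P where "P S \<longleftrightarrow> monom_le (monom_of_set S) \<gamma> \<and> \<gamma> - monom_of_set S \<in> monoms_of_degree n (N - k)"
    for S
  have "lookup (elem_sym n k * compl_sym n (N - k)) \<gamma> =
      (\<Sum>S\<in>card_subsets n k. \<Sum>\<mu>\<in>monoms_of_degree n (N - k). (1 when monom_of_set S + \<mu> = \<gamma>))"
    by (simp add: elem_sym_eq compl_sym_eq sum_product mult_single lookup_sum lookup_single)
  also have "\<dots> = (\<Sum>S\<in>card_subsets n k. if P S then 1 else 0)"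
  proof (intro sum.cong refl)
    fix S
    have "(\<Sum>\<mu>\<in>monoms_of_degree n (N - k). (1 when monom_of_set S + \<mu> = \<gamma>)) =
        (\<Sum>\<mu>\<in>monoms_of_degree n (N - k).
           if \<mu> = \<gamma> - monom_of_set S then (1 when monom_le (monom_of_set S) \<gamma>) else 0)"
      by (intro sum.cong refl) (auto simp: add_eq_iff_monom_le when_def)
    also have "\<dots> = (if P S then 1 else 0)"
      using finite_monoms_of_degree by (simp add: sum.delta P_def when_def)
    finally show "(\<Sum>\<mu>\<in>monoms_of_degree n (N - k). (1 when monom_of_set S + \<mu> = \<gamma>)) =
        (if P S then 1 else 0)" .
  qed
  also have "\<dots> = of_nat (card {S \<in> card_subsets n k. P S})"
    by (simp add: sum.inter_filter[symmetric, OF finite_card_subsets])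
  also have "\<dots> = (of_nat (card (keys \<gamma>) choose k) when keys \<gamma> \<subseteq> {..<n} \<and> deg_monom \<gamma> = N)"
    unfolding P_def card_subsets_below_monom[OF assms] by (simp add: n_subsets)
  finally show ?thesis .
qed

lemma alternating_sum_elem_sym_compl_sym:
  assumes "N \<ge> 1"
  shows "(\<Sum>k\<le>N. Const ((-1)^k) * (elem_sym n k * compl_sym n (N - k))) = 0"
proof (rule poly_mapping_eqI)
  fix \<gamma>
  have "lookup (\<Sum>k\<le>N. Const ((-1)^k) * (elem_sym n k * compl_sym n (N - k))) \<gamma> =
      (\<Sum>k\<le>N. (-1)^k * (of_nat (card (keys \<gamma>) choose k) when keys \<gamma> \<subseteq> {..<n} \<and> deg_monom \<gamma> = N))"
    by (simp add: lookup_sum lookup_Const_mult lookup_elem_sym_mult_compl_sym)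
  also have "\<dots> = 0"
  proof (cases "keys \<gamma> \<subseteq> {..<n} \<and> deg_monom \<gamma> = N")
    case True
    define c where "c = card (keys \<gamma>)"
    have "c \<le> N"
      using True card_keys_le_deg_monom[of \<gamma>] by (simp add: c_def)
    have "c > 0"
      using True assms by (auto simp: c_def card_gt_0_iff)
    have "(\<Sum>k\<le>N. (-1)^k * (of_nat (c choose k) :: complex)) = (\<Sum>k\<le>c. (-1)^k * of_nat (c choose k))"
      using \<open>c \<le> N\<close> by (intro sum.mono_neutral_right) auto
    also have "\<dots> = 0"
      using choose_alternating_sum[OF \<open>c > 0\<close>] by simp
    finally show ?thesis
      using True by (simp add: c_def)
  qed simp
  finally show "lookup (\<Sum>k\<le>N. Const ((-1)^k) * (elem_sym n k * compl_sym n (N - k))) \<gamma> = lookup 0 \<gamma>"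
    by simp
qed

inductive_set odd_ideal :: "nat \<Rightarrow> mpoly set" for n where
  zero: "0 \<in> odd_ideal n"
| elem_sym_mult: "odd k \<Longrightarrow> r \<in> Rsym n \<Longrightarrow> elem_sym n k * r \<in> odd_ideal n"
| add: "x \<in> odd_ideal n \<Longrightarrow> y \<in> odd_ideal n \<Longrightarrow> x + y \<in> odd_ideal n"

lemma odd_ideal_mult: "x \<in> odd_ideal n \<Longrightarrow> s \<in> Rsym n \<Longrightarrow> s * x \<in> odd_ideal n"
proof (induction rule: odd_ideal.induct)
  case (elem_sym_mult k r)
  then show ?case
    using odd_ideal.elem_sym_mult[of k "s * r"] by (simp add: Rsym_mult mult.left_commute)
qed (simp_all add: distrib_left odd_ideal.intros)

lemma odd_ideal_Const_mult: "x \<in> odd_ideal n \<Longrightarrow> Const c * x \<in> odd_ideal n"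
  by (simp add: odd_ideal_mult Rsym_Const)

lemma odd_ideal_uminus: "x \<in> odd_ideal n \<Longrightarrow> - x \<in> odd_ideal n"
  by (simp add: uminus_eq_Const_mult odd_ideal_Const_mult)

lemma odd_ideal_sum: "(\<And>i. i \<in> A \<Longrightarrow> f i \<in> odd_ideal n) \<Longrightarrow> (\<Sum>i\<in>A. f i) \<in> odd_ideal n"
  by (induction A rule: infinite_finite_induct) (simp_all add: odd_ideal.zero odd_ideal.add)

lemma compl_sym_odd_in_odd_ideal: "odd N \<Longrightarrow> compl_sym n N \<in> odd_ideal n"
proof (induction N rule: less_induct)
  case (less N)
  define g where "g k = Const ((-1)^k) * (elem_sym n k * compl_sym n (N - k))" for k
  have "N \<ge> 1"
    using less.prems by (cases N) auto
  then have "0 = (\<Sum>k\<le>N. g k)"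
    using alternating_sum_elem_sym_compl_sym[of N n] by (simp add: g_def)
  also have "\<dots> = compl_sym n N + (\<Sum>i<N. g (Suc i))"
    by (simp add: sum.atMost_shift g_def elem_sym_0)
  finally have eq: "compl_sym n N = - (\<Sum>i<N. g (Suc i))"
    by (simp add: eq_neg_iff_add_eq_0)
  have "g (Suc i) \<in> odd_ideal n" if "i < N" for i
  proof (cases "odd (Suc i)")
    case True
    then show ?thesis
      unfolding g_def by (intro odd_ideal_Const_mult odd_ideal.elem_sym_mult Rsym_compl_sym)
  next
    case False
    then have "compl_sym n (N - Suc i) \<in> odd_ideal n"
      using less that by (intro less.IH) auto
    then show ?thesis
      unfolding g_def by (intro odd_ideal_Const_mult odd_ideal_mult Rsym_elem_sym)
  qed
  then show ?case
    unfolding eq by (intro odd_ideal_uminus odd_ideal_sum) simp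
qed

lemma even_sum_elem_sym_compl_sym_in_odd_ideal:
  assumes "a \<ge> 1"
  shows "(\<Sum>t\<le>a. elem_sym n (2 * t) * compl_sym n (2 * a - 2 * t)) \<in> odd_ideal n"
proof -
  define E where "E k = elem_sym n k * compl_sym n (2 * a - k)" for k
  have "(\<Sum>k\<le>2 * a. Const ((-1)^k) * E k) = 0"
    using alternating_sum_elem_sym_compl_sym[of "2 * a" n] assms by (simp add: E_def)
  moreover have "Const ((-1)^k) * E k = (if even k then E k else 0) - (if even k then 0 else E k)" for k
    by (simp add: Const_minus)
  ultimately have "(\<Sum>k\<le>2 * a. if even k then E k else 0) = (\<Sum>k\<le>2 * a. if even k then 0 else E k)"
    by (simp add: sum_subtractf)
  moreover have "(\<Sum>k\<le>2 * a. if even k then 0 else E k) \<in> odd_ideal n"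
    by (intro odd_ideal_sum) (auto simp: E_def intro: odd_ideal.intros Rsym_compl_sym)
  moreover have "(\<Sum>k\<le>2 * a. if even k then E k else 0) = (\<Sum>t\<le>a. E (2 * t))"
  proof -
    have "(\<Sum>k\<le>2 * a. if even k then E k else 0) = sum E {k \<in> {..2 * a}. even k}"
      by (rule sum.inter_filter[symmetric]) simp
    also have "{k \<in> {..2 * a}. even k} = (\<lambda>t. 2 * t) ` {..a}"
      by (auto elim!: evenE)
    also have "sum E \<dots> = (\<Sum>t\<le>a. E (2 * t))"
      by (simp add: sum.reindex inj_on_def)
    finally show ?thesis .
  qed
  ultimately show ?thesis
    by (simp add: E_def)
qed

lemma module_span_zero: "0 \<in> module_span A G"
  unfolding module_span_def by (rule CollectI, rule exI[of _ "{}"]) auto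

lemma module_span_mult_gen: "a \<in> A \<Longrightarrow> g \<in> G \<Longrightarrow> a * g \<in> module_span A G"
  unfolding module_span_def
  by (rule CollectI, rule exI[of _ "{0}"], rule exI[of _ "\<lambda>_. a"], rule exI[of _ "\<lambda>_. g"]) auto

lemma module_span_add:
  assumes "x \<in> module_span A G" "y \<in> module_span A G"
  shows "x + y \<in> module_span A G"
proof -
  obtain F1 r1 g1 where x: "x = (\<Sum>i\<in>F1. r1 i * g1 i)" "finite (F1::nat set)" "\<forall>i\<in>F1. r1 i \<in> A \<and> g1 i \<in> G"
    using assms(1) unfolding module_span_def by blast
  obtain F2 r2 g2 where y: "y = (\<Sum>i\<in>F2. r2 i * g2 i)" "finite (F2::nat set)" "\<forall>i\<in>F2. r2 i \<in> A \<and> g2 i \<in> G"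
    using assms(2) unfolding module_span_def by blast
  define F where "F = (\<lambda>i. 2 * i) ` F1 \<union> (\<lambda>i. 2 * i + 1) ` F2"
  define r where "r i = (if even i then r1 (i div 2) else r2 (i div 2))" for i :: nat
  define g where "g i = (if even i then g1 (i div 2) else g2 (i div 2))" for i :: nat
  have "(\<lambda>i::nat. 2 * i) ` F1 \<inter> (\<lambda>i. 2 * i + 1) ` F2 = {}"
    by auto presburger
  then have "(\<Sum>i\<in>F. r i * g i) =
      (\<Sum>i\<in>(\<lambda>i. 2 * i) ` F1. r i * g i) + (\<Sum>i\<in>(\<lambda>i. 2 * i + 1) ` F2. r i * g i)"
    unfolding F_def using x(2) y(2) by (intro sum.union_disjoint) auto
  also have "\<dots> = x + y"
    unfolding x(1) y(1) by (simp add: sum.reindex inj_on_def r_def g_def)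
  finally have "x + y = (\<Sum>i\<in>F. r i * g i)" ..
  moreover have "finite F" "\<forall>i\<in>F. r i \<in> A \<and> g i \<in> G"
    using x(2,3) y(2,3) by (auto simp: F_def r_def g_def)
  ultimately show ?thesis
    unfolding module_span_def mem_Collect_eq by (intro exI[of _ F] exI[of _ r] exI[of _ g]) simp
qed

lemma module_span_mult:
  assumes "s \<in> A" "\<And>a. a \<in> A \<Longrightarrow> s * a \<in> A" "x \<in> module_span A G"
  shows "s * x \<in> module_span A G"
proof -
  obtain F r g where x: "x = (\<Sum>i\<in>F. r i * g i)" "finite (F::nat set)" "\<forall>i\<in>F. r i \<in> A \<and> g i \<in> G"
    using assms(3) unfolding module_span_def by blast
  then have "s * x = (\<Sum>i\<in>F. (s * r i) * g i)"
    by (simp add: sum_distrib_left mult.assoc)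
  then show ?thesis
    unfolding module_span_def mem_Collect_eq using x(2,3) assms(2)
    by (intro exI[of _ F] exI[of _ "\<lambda>i. s * r i"] exI[of _ g]) simp
qed

lemma module_span_subset_Rsym:
  assumes "A \<subseteq> Rsym n" "G \<subseteq> Rsym n"
  shows "module_span A G \<subseteq> Rsym n"
proof
  fix x assume "x \<in> module_span A G"
  then obtain F r g where "x = (\<Sum>i\<in>(F::nat set). r i * g i)" "\<forall>i\<in>F. r i \<in> A \<and> g i \<in> G"
    unfolding module_span_def by blast
  then show "x \<in> Rsym n"
    using assms by (auto intro!: Rsym_sum Rsym_mult)
qed

lemma Rodd_Const: "Const c \<in> Rodd n"
  unfolding Rodd_def by (rule subalg.const)

lemma Rodd_mult: "a \<in> Rodd n \<Longrightarrow> b \<in> Rodd n \<Longrightarrow> a * b \<in> Rodd n"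
  unfolding Rodd_def by (rule subalg.mult)

lemma Rodd_elem_sym:
  assumes "odd k"
  shows "elem_sym n k \<in> Rodd n"
proof (cases "k \<le> n")
  case True
  then show ?thesis
    unfolding Rodd_def using assms by (intro subalg.gen) (auto elim!: oddE)
next
  case False
  then show ?thesis
    using Rodd_Const[of 0 n] by (simp add: elem_sym_eq_0)
qed

lemma Rodd_subset_Rsym: "Rodd n \<subseteq> Rsym n"
proof
  fix a assume "a \<in> Rodd n"
  then show "a \<in> Rsym n"
    unfolding Rodd_def
    by (induction rule: subalg.induct) (auto intro: Rsym_Const Rsym_add Rsym_mult Rsym_elem_sym)
qed

definition h_products :: "nat \<Rightarrow> mpoly set" where
  "h_products n = {(\<Prod>j<n div 2. compl_sym n (i j)) | i :: nat \<Rightarrow> nat. True}"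

lemma h_products_subset_Rsym: "h_products n \<subseteq> Rsym n"
  unfolding h_products_def by (auto intro!: Rsym_prod Rsym_compl_sym)

lemma homogeneous_if_h_products: "g \<in> h_products n \<Longrightarrow> \<exists>E. homogeneous E g"
  unfolding h_products_def by (auto intro!: homogeneous_prod homogeneous_compl_sym)

abbreviation Rodd_span :: "nat \<Rightarrow> mpoly set" where
  "Rodd_span n \<equiv> module_span (Rodd n) (h_products n)"

lemma Rodd_span_mult: "a \<in> Rodd n \<Longrightarrow> x \<in> Rodd_span n \<Longrightarrow> a * x \<in> Rodd_span n"
  by (rule module_span_mult) (auto intro: Rodd_mult)

lemma h_products_subset_Rodd_span: "h_products n \<subseteq> Rodd_span n"
  using module_span_mult_gen[OF Rodd_Const[of 1 n]] by auto

section \<open>Shift operators and a Vandermonde argument\<close>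

inductive_set span_h_odd :: "nat \<Rightarrow> mpoly set" for n where
  gen: "g \<in> h_products n \<Longrightarrow> Const c * g \<in> span_h_odd n"
| ideal: "x \<in> odd_ideal n \<Longrightarrow> x \<in> span_h_odd n"
| add: "x \<in> span_h_odd n \<Longrightarrow> y \<in> span_h_odd n \<Longrightarrow> x + y \<in> span_h_odd n"

lemma span_h_odd_zero: "0 \<in> span_h_odd n"
  by (rule span_h_odd.ideal[OF odd_ideal.zero])

lemma span_h_odd_Const_mult: "x \<in> span_h_odd n \<Longrightarrow> Const c * x \<in> span_h_odd n"
proof (induction rule: span_h_odd.induct)
  case (gen g d)
  then show ?case
    using span_h_odd.gen[of g n "c * d"] by (simp add: Const_mult mult.assoc)
qed (simp_all add: distrib_left span_h_odd.intros odd_ideal_Const_mult)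

lemma span_h_odd_diff:
  assumes "x \<in> span_h_odd n" "y \<in> span_h_odd n"
  shows "x - y \<in> span_h_odd n"
proof -
  have "x + Const (-1) * y \<in> span_h_odd n"
    using assms by (simp add: span_h_odd.add span_h_odd_Const_mult)
  then show ?thesis
    by (simp flip: uminus_eq_Const_mult)
qed

lemma span_h_odd_sum: "(\<And>i. i \<in> A \<Longrightarrow> f i \<in> span_h_odd n) \<Longrightarrow> (\<Sum>i\<in>A. f i) \<in> span_h_odd n"
  by (induction A rule: infinite_finite_induct) (simp_all add: span_h_odd_zero span_h_odd.add)

text \<open>The type \<^typ>\<open>mpoly\<close> is reused for a second polynomial ring, acting on families of
  polynomials indexed by exponent vectors: the variable \<open>Var l\<close> lowers the \<open>l\<close>-th index by one,
  and a family shifted below zero counts as \<open>0\<close>.\<close>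

definition shift_op :: "mpoly \<Rightarrow> (monom \<Rightarrow> mpoly) \<Rightarrow> monom \<Rightarrow> mpoly" where
  "shift_op p f a = (\<Sum>\<beta>\<in>keys p. Const (lookup p \<beta>) * (if monom_le \<beta> a then f (a - \<beta>) else 0))"

lemma shift_op_superset:
  assumes "finite S" "keys p \<subseteq> S"
  shows "shift_op p f a = (\<Sum>\<beta>\<in>S. Const (lookup p \<beta>) * (if monom_le \<beta> a then f (a - \<beta>) else 0))"
  unfolding shift_op_def by (rule sum.mono_neutral_left) (use assms in \<open>auto simp: in_keys_iff\<close>)

lemma shift_op_add: "shift_op (p + q) f a = shift_op p f a + shift_op q f a"
proof -
  have fin: "finite (keys p \<union> keys q)" by simp
  have "shift_op (p + q) f a = (\<Sum>\<beta>\<in>keys p \<union> keys q.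
      Const (lookup (p + q) \<beta>) * (if monom_le \<beta> a then f (a - \<beta>) else 0))"
    using keys_add[of p q] by (intro shift_op_superset[OF fin])
  also have "\<dots> = shift_op p f a + shift_op q f a"
    by (simp add: lookup_add Const_add distrib_right sum.distrib shift_op_superset[OF fin])
  finally show ?thesis .
qed

lemma shift_op_Const_mult: "shift_op (Const c * p) f a = Const c * shift_op p f a"
proof -
  have "shift_op (Const c * p) f a = (\<Sum>\<beta>\<in>keys p.
      Const (lookup (Const c * p) \<beta>) * (if monom_le \<beta> a then f (a - \<beta>) else 0))"
    using keys_Const_mult[of c p] by (intro shift_op_superset) auto
  then show ?thesis
    by (simp add: shift_op_def lookup_Const_mult Const_mult sum_distrib_left mult.assoc)
qed

lemma shift_op_diff: "shift_op (p - q) f a = shift_op p f a - shift_op q f a"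
  using shift_op_add[of p "- q" f a] shift_op_Const_mult[of "-1" q f a]
  by (simp add: uminus_eq_Const_mult[symmetric])

lemma shift_op_zero: "shift_op 0 f a = 0"
  by (simp add: shift_op_def)

lemma shift_op_sum: "shift_op (\<Sum>i\<in>I. p i) f a = (\<Sum>i\<in>I. shift_op (p i) f a)"
  by (induction I rule: infinite_finite_induct) (simp_all add: shift_op_zero shift_op_add)

lemma shift_op_single:
  "shift_op (single \<beta> c) f a = Const c * (if monom_le \<beta> a then f (a - \<beta>) else 0)"
  by (cases "c = 0") (simp_all add: shift_op_def)

lemma shift_op_zero_family: "shift_op p (\<lambda>b. 0) a = 0"
  by (simp add: shift_op_def)

lemma shift_op_add_family: "shift_op p (\<lambda>b. f b + g b) a = shift_op p f a + shift_op p g a"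
proof -
  have "Const (lookup p \<beta>) * (if monom_le \<beta> a then f (a - \<beta>) + g (a - \<beta>) else 0) =
      Const (lookup p \<beta>) * (if monom_le \<beta> a then f (a - \<beta>) else 0) +
      Const (lookup p \<beta>) * (if monom_le \<beta> a then g (a - \<beta>) else 0)" for \<beta>
    by (simp add: distrib_left)
  then show ?thesis
    by (simp add: shift_op_def sum.distrib)
qed

lemma shift_op_sum_family: "shift_op p (\<lambda>b. \<Sum>i\<in>I. f i b) a = (\<Sum>i\<in>I. shift_op p (f i) a)"
  by (induction I rule: infinite_finite_induct) (simp_all add: shift_op_zero_family shift_op_add_family)

lemma monom_le_minus_iff: "monom_le \<alpha> a \<Longrightarrow> monom_le \<beta> (a - \<alpha>) \<longleftrightarrow> monom_le (\<alpha> + \<beta>) a"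
  by (auto simp: monom_le_def lookup_add lookup_minus_monom le_diff_conv2 add.commute)

lemma shift_op_mult: "shift_op (p * q) f a = shift_op p (shift_op q f) a"
proof -
  have "shift_op (p * q) f a =
      (\<Sum>\<alpha>\<in>keys p. \<Sum>\<beta>\<in>keys q. shift_op (single (\<alpha> + \<beta>) (lookup p \<alpha> * lookup q \<beta>)) f a)"
    by (subst mpoly_mult_expand) (simp add: shift_op_sum)
  also have "\<dots> = (\<Sum>\<alpha>\<in>keys p. Const (lookup p \<alpha>) *
      (if monom_le \<alpha> a then shift_op q f (a - \<alpha>) else 0))"
  proof (intro sum.cong refl)
    fix \<alpha>
    show "(\<Sum>\<beta>\<in>keys q. shift_op (single (\<alpha> + \<beta>) (lookup p \<alpha> * lookup q \<beta>)) f a) =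
        Const (lookup p \<alpha>) * (if monom_le \<alpha> a then shift_op q f (a - \<alpha>) else 0)"
    proof (cases "monom_le \<alpha> a")
      case True
      have "(\<Sum>\<beta>\<in>keys q. shift_op (single (\<alpha> + \<beta>) (lookup p \<alpha> * lookup q \<beta>)) f a) =
          (\<Sum>\<beta>\<in>keys q. Const (lookup p \<alpha>) *
             (Const (lookup q \<beta>) * (if monom_le \<beta> (a - \<alpha>) then f (a - \<alpha> - \<beta>) else 0)))"
        using True by (intro sum.cong refl)
          (simp add: shift_op_single Const_mult monom_le_minus_iff diff_diff_add mult.assoc)
      also have "\<dots> = Const (lookup p \<alpha>) * shift_op q f (a - \<alpha>)"
        by (simp add: shift_op_def sum_distrib_left)
      finally show ?thesis
        using True by simp
    next
      case False
      then have "\<not> monom_le (\<alpha> + \<beta>) a" for \<beta>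
        by (auto simp: monom_le_def lookup_add intro: le_trans[OF le_add1])
      then show ?thesis
        using False by (simp add: shift_op_single)
    qed
  qed
  also have "\<dots> = shift_op p (shift_op q f) a"
    by (simp add: shift_op_def)
  finally show ?thesis .
qed

lemma shift_op_one: "shift_op 1 f a = f a"
  using shift_op_single[of 0 1 f a] by (simp add: monom_le_def)

lemma shift_op_Var_power:
  "shift_op (Var l ^ t) f a = (if t \<le> lookup a l then f (a - single l t) else 0)"
  by (simp add: Var_power shift_op_single monom_le_def lookup_single when_def)

definition span_valued :: "nat \<Rightarrow> (monom \<Rightarrow> mpoly) \<Rightarrow> bool" where
  "span_valued n f \<longleftrightarrow> (\<forall>a. f a \<in> span_h_odd n)"

definition cancellable :: "nat \<Rightarrow> mpoly \<Rightarrow> bool" where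
  "cancellable n p \<longleftrightarrow> (\<forall>f. span_valued n (shift_op p f) \<longrightarrow> span_valued n f)"

lemma span_valued_shift_op: "span_valued n f \<Longrightarrow> span_valued n (shift_op p f)"
  unfolding span_valued_def shift_op_def
  by (auto intro!: span_h_odd_sum span_h_odd_Const_mult simp: span_h_odd_zero)

lemma span_valued_diff: "span_valued n f \<Longrightarrow> span_valued n g \<Longrightarrow> span_valued n (\<lambda>a. f a - g a)"
  unfolding span_valued_def by (auto intro: span_h_odd_diff)

lemma add_single_diff_single: "(b::monom) + single l 1 - single l 1 = b"
  by (rule poly_mapping_eqI) (simp add: lookup_minus_monom lookup_add)

lemma cancellable_Var: "cancellable n (Var l)"
  unfolding cancellable_def span_valued_def
proof (intro allI impI)
  fix f b assume "\<forall>a. shift_op (Var l) f a \<in> span_h_odd n"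
  moreover have "shift_op (Var l) f (b + single l 1) = f b"
    using shift_op_Var_power[of l 1 f "b + single l 1"] by (simp add: lookup_add add_single_diff_single)
  ultimately show "f b \<in> span_h_odd n"
    by metis
qed

lemma cancellable_Var_diff:
  assumes "l \<noteq> l'"
  shows "cancellable n (Var l - Var l')"
  unfolding cancellable_def span_valued_def
proof (intro allI impI)
  fix f b assume f: "\<forall>a. shift_op (Var l - Var l') f a \<in> span_h_odd n"
  \<comment> \<open>induction on the \<open>l'\<close>-th exponent, using
    \<open>((Var l - Var l') f)(b + e\<^sub>l) = f b - f (b + e\<^sub>l - e\<^sub>l\<^sub>')\<close>\<close>
  have "\<forall>b. lookup b l' = k \<longrightarrow> f b \<in> span_h_odd n" for k
  proof (induction k)
    case 0
    show ?case
    proof (intro allI impI)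
      fix b :: monom assume "lookup b l' = 0"
      then have "shift_op (Var l - Var l') f (b + single l 1) = f b"
        using assms shift_op_Var_power[of l 1 f "b + single l 1"] shift_op_Var_power[of l' 1 f "b + single l 1"]
        by (simp add: shift_op_diff lookup_add lookup_single add_single_diff_single)
      then show "f b \<in> span_h_odd n"
        using f by metis
    qed
  next
    case (Suc k)
    show ?case
    proof (intro allI impI)
      fix b :: monom assume b: "lookup b l' = Suc k"
      define b' where "b' = b + single l 1 - single l' 1"
      have "lookup b' l' = k"
        using b assms by (simp add: b'_def lookup_minus_monom lookup_add lookup_single)
      then have "f b' \<in> span_h_odd n"
        using Suc.IH by blast
      moreover have "shift_op (Var l - Var l') f (b + single l 1) = f b - f b'"
        using b assms shift_op_Var_power[of l 1 f "b + single l 1"] shift_op_Var_power[of l' 1 f "b + single l 1"]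
        by (simp add: shift_op_diff lookup_add lookup_single add_single_diff_single b'_def)
      ultimately show "f b \<in> span_h_odd n"
        using f span_h_odd.add by (metis diff_add_cancel)
    qed
  qed
  then show "f b \<in> span_h_odd n"
    by blast
qed

text \<open>The identity \<open>x\<^sup>j - y\<^sup>j = (x - y) \<Sum>\<^sub>i\<^sub><\<^sub>j x\<^sup>i y\<^sup>j\<^sup>-\<^sup>1\<^sup>-\<^sup>i\<close>, summed against a family \<open>u\<close>.\<close>

lemma shift_op_power_sums_diff:
  "(\<Sum>j<Suc d. shift_op (r ^ j) (u j) a) - (\<Sum>j<Suc d. shift_op (s ^ j) (u j) a) =
    shift_op (r - s)
      (\<lambda>b. \<Sum>i<d. shift_op (r ^ i) (\<lambda>c. \<Sum>j\<in>{Suc i..d}. shift_op (s ^ (j - Suc i)) (u j) c) b) a"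
proof -
  have factor: "shift_op (\<Sum>i<j. s ^ (j - Suc i) * r ^ i) g =
      (\<lambda>b. \<Sum>i<j. shift_op (r ^ i) (shift_op (s ^ (j - Suc i)) g) b)" for j g
    by (rule ext) (simp add: shift_op_sum shift_op_mult[symmetric] mult.commute)
  have "(\<Sum>j<Suc d. shift_op (r ^ j) (u j) a) - (\<Sum>j<Suc d. shift_op (s ^ j) (u j) a) =
      (\<Sum>j<Suc d. shift_op (r ^ j - s ^ j) (u j) a)"
    by (simp only: shift_op_diff sum_subtractf)
  also have "\<dots> = (\<Sum>j<Suc d. shift_op ((r - s) * (\<Sum>i<j. s ^ (j - Suc i) * r ^ i)) (u j) a)"
    by (simp only: power_diff_sumr2)
  also have "\<dots> = shift_op (r - s)
      (\<lambda>b. \<Sum>j\<le>d. \<Sum>i<j. shift_op (r ^ i) (shift_op (s ^ (j - Suc i)) (u j)) b) a"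
    by (simp only: shift_op_mult factor shift_op_sum_family lessThan_Suc_atMost)
  also have "(\<lambda>b. \<Sum>j\<le>d. \<Sum>i<j. shift_op (r ^ i) (shift_op (s ^ (j - Suc i)) (u j)) b) =
      (\<lambda>b. \<Sum>i<d. shift_op (r ^ i) (\<lambda>c. \<Sum>j\<in>{Suc i..d}. shift_op (s ^ (j - Suc i)) (u j) c) b)"
    by (simp only: sum.nested_swap' shift_op_sum_family)
  finally show ?thesis .
qed

lemma shift_op_power_sum_horner:
  assumes "j \<le> d"
  shows "(\<Sum>j'\<in>{j..d}. shift_op (s ^ (j' - j)) (u j') a) =
    u j a + shift_op s (\<lambda>c. \<Sum>j'\<in>{Suc j..d}. shift_op (s ^ (j' - Suc j)) (u j') c) a"
proof -
  have "shift_op (s ^ (j' - j)) (u j') a = shift_op s (shift_op (s ^ (j' - Suc j)) (u j')) a"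
    if "j' \<in> {Suc j..d}" for j'
    using that by (simp add: shift_op_mult[symmetric] Suc_diff_Suc[symmetric] del: Suc_diff_Suc)
  then show ?thesis
    using assms by (simp add: sum.atLeast_Suc_atMost shift_op_one shift_op_sum_family)
qed

lemma span_valued_vandermonde:
  assumes "\<And>l l'. l < N \<Longrightarrow> l' < N \<Longrightarrow> l \<noteq> l' \<Longrightarrow> cancellable n (r l - r l')"
    and "\<And>l. l < N \<Longrightarrow> span_valued n (\<lambda>a. \<Sum>j<N. shift_op (r l ^ j) (u j) a)"
    and "j < N"
  shows "span_valued n (u j)"
  using assms
proof (induction N arbitrary: u j)
  case (Suc d)
  \<comment> \<open>the \<open>q i\<close> are the coefficients of \<open>(P\<^sub>l - P\<^sub>d) / (r\<^sub>l - r\<^sub>d)\<close>, where \<open>P\<^sub>l = \<Sum>\<^sub>j r\<^sub>l\<^sup>j u\<^sub>j\<close>;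
    the IH makes them \<^const>\<open>span_valued\<close>, and then \<open>u\<^sub>j = Q\<^sub>j - r\<^sub>d q\<^sub>j\<close>\<close>
  define q where "q i = (\<lambda>a. \<Sum>j'\<in>{Suc i..d}. shift_op (r d ^ (j' - Suc i)) (u j') a)" for i
  have q: "span_valued n (q i)" if "i < d" for i
  proof (rule Suc.IH[where u = q])
    show "cancellable n (r l - r l')" if "l < d" "l' < d" "l \<noteq> l'" for l l'
      using Suc.prems(1) that by simp
  next
    fix l assume "l < d"
    then have "span_valued n (\<lambda>a. (\<Sum>j<Suc d. shift_op (r l ^ j) (u j) a) -
        (\<Sum>j<Suc d. shift_op (r d ^ j) (u j) a))"
      using Suc.prems(2) by (intro span_valued_diff) auto
    then have "span_valued n (shift_op (r l - r d) (\<lambda>b. \<Sum>i<d. shift_op (r l ^ i) (q i) b))"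
      unfolding shift_op_power_sums_diff q_def by simp
    then show "span_valued n (\<lambda>a. \<Sum>i<d. shift_op (r l ^ i) (q i) a)"
      using Suc.prems(1)[of l d] \<open>l < d\<close> by (simp add: cancellable_def)
  qed (rule that)
  define Q where "Q j = (\<lambda>a. \<Sum>j'\<in>{j..d}. shift_op (r d ^ (j' - j)) (u j') a)" for j
  have "span_valued n (Q j)"
  proof (cases j)
    case 0
    then show ?thesis
      using Suc.prems(2)[of d] by (simp add: Q_def atLeast0AtMost lessThan_Suc_atMost)
  next
    case (Suc i)
    then show ?thesis
      using q[of i] Suc.prems(3) by (simp add: Q_def q_def)
  qed
  moreover have "span_valued n (shift_op (r d) (q j))"
  proof (cases "j < d")
    case False
    then have "q j = (\<lambda>a. 0)"
      by (simp add: q_def)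
    then show ?thesis
      by (simp add: span_valued_def shift_op_zero_family span_h_odd_zero)
  qed (simp add: q span_valued_shift_op)
  ultimately have "span_valued n (\<lambda>a. Q j a - shift_op (r d) (q j) a)"
    by (rule span_valued_diff)
  then show ?case
    using Suc.prems(3) by (simp add: Q_def q_def shift_op_power_sum_horner)
qed simp

section \<open>Multiplication by the even elementary symmetric polynomials\<close>

definition even_h_product :: "nat \<Rightarrow> monom \<Rightarrow> mpoly" where
  "even_h_product n a = (\<Prod>i<n div 2. compl_sym n (2 * lookup a i))"

lemma even_h_product_in_h_products: "even_h_product n a \<in> h_products n"
  unfolding even_h_product_def h_products_def mem_Collect_eq
  by (rule exI[of _ "\<lambda>i. 2 * lookup a i"]) simp

lemma even_h_product_0: "even_h_product n 0 = 1"
  by (simp add: even_h_product_def compl_sym_0)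

lemma even_h_product_remove:
  assumes "l < n div 2"
  shows "even_h_product n a =
    compl_sym n (2 * lookup a l) * (\<Prod>i\<in>{..<n div 2} - {l}. compl_sym n (2 * lookup a i))"
  unfolding even_h_product_def using assms by (simp add: prod.remove)

lemma even_h_product_diff_single:
  assumes "l < n div 2"
  shows "even_h_product n (a - single l t) =
    compl_sym n (2 * (lookup a l - t)) * (\<Prod>i\<in>{..<n div 2} - {l}. compl_sym n (2 * lookup a i))"
proof -
  have "(\<Prod>i\<in>{..<n div 2} - {l}. compl_sym n (2 * lookup (a - single l t) i)) =
      (\<Prod>i\<in>{..<n div 2} - {l}. compl_sym n (2 * lookup a i))"
    by (intro prod.cong) (simp_all add: lookup_minus_monom lookup_single)
  then show ?thesis
    using even_h_product_remove[OF assms, of "a - single l t"] by (simp add: lookup_minus_monom)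
qed

lemma shift_op_even_relation_eq:
  assumes l: "l < n div 2"
  shows "(\<Sum>j<n div 2. shift_op (Var l ^ Suc j) (\<lambda>b. elem_sym n (2 * Suc j) * even_h_product n b) a) =
    (\<Sum>t<lookup a l. elem_sym n (2 * Suc t) * compl_sym n (2 * lookup a l - 2 * Suc t)) *
    (\<Prod>i\<in>{..<n div 2} - {l}. compl_sym n (2 * lookup a i))"
proof -
  define m where "m = n div 2"
  define A where "A = lookup a l"
  define P where "P = (\<Prod>i\<in>{..<m} - {l}. compl_sym n (2 * lookup a i))"
  define X where "X t = elem_sym n (2 * t) * compl_sym n (2 * A - 2 * t)" for t
  have "(\<Sum>j<m. shift_op (Var l ^ Suc j) (\<lambda>b. elem_sym n (2 * Suc j) * even_h_product n b) a) =
      (\<Sum>j<m. if Suc j \<le> A then X (Suc j) else 0) * P"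
    unfolding sum_distrib_right
  proof (intro sum.cong refl)
    fix j
    show "shift_op (Var l ^ Suc j) (\<lambda>b. elem_sym n (2 * Suc j) * even_h_product n b) a =
        (if Suc j \<le> A then X (Suc j) else 0) * P"
      using l by (simp only: shift_op_Var_power)
        (simp add: even_h_product_diff_single A_def X_def P_def m_def mult.assoc diff_mult_distrib2)
  qed
  also have "(\<Sum>j<m. if Suc j \<le> A then X (Suc j) else 0) = (\<Sum>j<m + A. if Suc j \<le> A then X (Suc j) else 0)"
    by (rule sum.mono_neutral_left) (auto simp: X_def m_def elem_sym_eq_0)
  also have "\<dots> = (\<Sum>j<A. X (Suc j))"
    by (subst sum.mono_neutral_right[of "{..<m + A}" "{..<A}"]) auto
  finally show ?thesis
    by (simp add: X_def A_def P_def m_def)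
qed

text \<open>The relation \<open>\<Sum>\<^sub>t e\<^sub>2\<^sub>t h\<^sub>2\<^sub>A\<^sub>-\<^sub>2\<^sub>t \<in> odd_ideal\<close>, with \<open>A = a\<^sub>l\<close>, in the \<open>l\<close>-th factor of
  \<^const>\<open>even_h_product\<close>: the term \<open>t = 0\<close> is \<open>even_h_product n a\<close> itself.\<close>

lemma shift_even_relation_in_span:
  assumes l: "l < n div 2"
  shows "(\<Sum>j<n div 2. shift_op (Var l ^ Suc j) (\<lambda>b. elem_sym n (2 * Suc j) * even_h_product n b) a)
    \<in> span_h_odd n"
proof -
  define A where "A = lookup a l"
  define P where "P = (\<Prod>i\<in>{..<n div 2} - {l}. compl_sym n (2 * lookup a i))"
  define X where "X t = elem_sym n (2 * t) * compl_sym n (2 * A - 2 * t)" for t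
  have "X 0 * P = even_h_product n a"
    using even_h_product_remove[OF l, of a] by (simp add: X_def A_def P_def elem_sym_0)
  then have X0: "X 0 * P \<in> span_h_odd n"
    using span_h_odd.gen[OF even_h_product_in_h_products[of n a], of 1] by simp
  have "(\<Sum>t\<le>A. X t) * P \<in> span_h_odd n"
  proof (cases "A = 0")
    case False
    then show ?thesis
      using even_sum_elem_sym_compl_sym_in_odd_ideal[of A n]
      by (intro span_h_odd.ideal) (simp add: X_def P_def odd_ideal_mult[where x = "sum _ _"]
          mult.commute Rsym_prod Rsym_compl_sym)
  qed (use X0 in simp)
  then have "(\<Sum>t\<le>A. X t) * P - X 0 * P \<in> span_h_odd n"
    using X0 by (rule span_h_odd_diff)
  then show ?thesis
    unfolding shift_op_even_relation_eq[OF l]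
    by (simp add: sum.atMost_shift algebra_simps X_def A_def P_def)
qed

lemma elem_sym_even_mult_even_h_product:
  assumes "j < n div 2"
  shows "elem_sym n (2 * Suc j) * even_h_product n a \<in> span_h_odd n"
proof -
  define u where "u j = (\<lambda>b. elem_sym n (2 * Suc j) * even_h_product n b)" for j
  have "span_valued n (u j)"
  proof (rule span_valued_vandermonde[where r = Var])
    show "cancellable n (Var l - Var l')" if "l \<noteq> l'" for l l'
      using that by (rule cancellable_Var_diff)
  next
    fix l assume "l < n div 2"
    have "shift_op (Var l) (\<lambda>a. \<Sum>j<n div 2. shift_op (Var l ^ j) (u j) a) b =
        (\<Sum>j<n div 2. shift_op (Var l ^ Suc j) (u j) b)" for b
      by (simp add: shift_op_sum_family shift_op_mult[symmetric])
    then have "span_valued n (shift_op (Var l) (\<lambda>a. \<Sum>j<n div 2. shift_op (Var l ^ j) (u j) a))"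
      using shift_even_relation_in_span[OF \<open>l < n div 2\<close>] by (simp add: span_valued_def u_def)
    then show "span_valued n (\<lambda>a. \<Sum>j<n div 2. shift_op (Var l ^ j) (u j) a)"
      using cancellable_Var by (simp add: cancellable_def)
  qed (rule assms)
  then show ?thesis
    by (simp add: span_valued_def u_def)
qed

lemma span_h_odd_elem_sym_even_mult:
  assumes "1 \<le> t" "t \<le> n div 2" and "x \<in> span_h_odd n"
  shows "elem_sym n (2 * t) * x \<in> span_h_odd n"
  using assms(3)
proof (induction rule: span_h_odd.induct)
  case (gen g c)
  then obtain i where g: "g = (\<Prod>j<n div 2. compl_sym n (i j))"
    by (auto simp: h_products_def)
  show ?case
  proof (cases "\<exists>j<n div 2. odd (i j)")
    case True
    then obtain j where "j < n div 2" "odd (i j)"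
      by blast
    then have "g = (\<Prod>j'\<in>{..<n div 2} - {j}. compl_sym n (i j')) * compl_sym n (i j)"
      unfolding g by (simp add: prod.remove mult.commute)
    then have "g \<in> odd_ideal n"
      using compl_sym_odd_in_odd_ideal[OF \<open>odd (i j)\<close>]
      by (simp add: odd_ideal_mult Rsym_prod Rsym_compl_sym)
    then show ?thesis
      by (intro span_h_odd.ideal odd_ideal_mult odd_ideal_Const_mult Rsym_elem_sym)
  next
    case False
    define a where "a = (\<Sum>j<n div 2. single j (i j div 2))"
    have "lookup a j = i j div 2" if "j < n div 2" for j
      using that by (simp add: a_def lookup_sum lookup_single when_def)
    then have "even_h_product n a = g"
      unfolding even_h_product_def g using False by (intro prod.cong) auto
    moreover obtain s where "t = Suc s"
      using assms(1) by (cases t) auto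
    ultimately have "elem_sym n (2 * t) * g \<in> span_h_odd n"
      using assms(2) elem_sym_even_mult_even_h_product[of s n a] by simp
    then have "Const c * (elem_sym n (2 * t) * g) \<in> span_h_odd n"
      by (rule span_h_odd_Const_mult)
    then show ?thesis
      by (simp add: mult.left_commute)
  qed
qed (simp_all add: distrib_left span_h_odd.intros odd_ideal_mult Rsym_elem_sym)

lemma elem_sym_prod_in_span_h_odd:
  assumes "\<And>k. k \<in> {1..n} \<Longrightarrow> odd k \<Longrightarrow> c k = 0"
  shows "elem_sym_prod n c \<in> span_h_odd n"
proof -
  have "S \<subseteq> {1..n} \<Longrightarrow> (\<Prod>k\<in>S. elem_sym n k ^ c k) \<in> span_h_odd n" for S
  proof (induction S rule: infinite_finite_induct)
    case (infinite S)
    then show ?case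
      using finite_subset[of S "{1..n}"] by simp
  next
    case empty
    show ?case
      using span_h_odd.gen[OF even_h_product_in_h_products[of n 0], of 1] by (simp add: even_h_product_0)
  next
    case (insert k F)
    have "elem_sym n k ^ p * (\<Prod>k\<in>F. elem_sym n k ^ c k) \<in> span_h_odd n" if "p = 0 \<or> even k" for p
      using that
    proof (induction p)
      case (Suc p)
      then obtain t where "k = 2 * t"
        by (auto elim: evenE)
      moreover have "1 \<le> t" "t \<le> n div 2"
        using insert.prems \<open>k = 2 * t\<close> by auto
      ultimately show ?case
        using Suc by (simp add: mult.assoc span_h_odd_elem_sym_even_mult)
    qed (use insert in simp)
    then show ?case
      using insert assms by (cases "even k") auto
  qed
  then show ?thesis
    unfolding elem_sym_prod_def by simp
qed

section \<open>Every symmetric polynomial lies in the span\<close>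

lemma homog_part_odd_ideal_in_Rodd_span:
  assumes IH: "\<And>D' r. D' < D \<Longrightarrow> r \<in> Rsym n \<Longrightarrow> degree_le D' r \<Longrightarrow> r \<in> Rodd_span n"
    and "x \<in> odd_ideal n"
  shows "homog_part D x \<in> Rodd_span n"
  using assms(2)
proof (induction rule: odd_ideal.induct)
  case zero
  show ?case
    using homog_part_homogeneous[OF homogeneous_one] homog_part_Const_mult[of D 0 1]
    by (simp add: module_span_zero)
next
  case (elem_sym_mult k r)
  have "0 < k"
    using elem_sym_mult.hyps(1) by (rule odd_pos)
  then have "homog_part (D - k) r \<in> Rodd_span n" if "k \<le> D"
    using that elem_sym_mult
    by (intro IH[of "D - k"] Rsym_homog_part degree_le_if_homogeneous[OF homogeneous_homog_part]) auto
  then show ?case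
    using elem_sym_mult Rodd_elem_sym
    by (simp add: homog_part_homogeneous_mult[OF homogeneous_elem_sym] Rodd_span_mult module_span_zero)
next
  case (add x y)
  then show ?case
    by (simp add: homog_part_add module_span_add)
qed

lemma homog_part_span_h_odd_in_Rodd_span:
  assumes IH: "\<And>D' r. D' < D \<Longrightarrow> r \<in> Rsym n \<Longrightarrow> degree_le D' r \<Longrightarrow> r \<in> Rodd_span n"
    and "x \<in> span_h_odd n"
  shows "homog_part D x \<in> Rodd_span n"
  using assms(2)
proof (induction rule: span_h_odd.induct)
  case (gen g c)
  then obtain E where "homogeneous E g"
    using homogeneous_if_h_products by blast
  moreover have "Const c * g \<in> Rodd_span n"
    using gen h_products_subset_Rodd_span by (intro Rodd_span_mult Rodd_Const) auto
  ultimately show ?case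
    by (simp add: homog_part_Const_mult homog_part_homogeneous module_span_zero)
next
  case (ideal x)
  show ?case
    using IH ideal by (rule homog_part_odd_ideal_in_Rodd_span)
next
  case (add x y)
  then show ?case
    by (simp add: homog_part_add module_span_add)
qed

lemma elem_sym_prod_in_Rodd_span:
  assumes IH: "\<And>D' r. D' < D \<Longrightarrow> r \<in> Rsym n \<Longrightarrow> degree_le D' r \<Longrightarrow> r \<in> Rodd_span n"
    and D: "D = (\<Sum>k\<in>{1..n}. c k * k)"
  shows "elem_sym_prod n c \<in> Rodd_span n"
proof (cases "\<exists>k\<in>{1..n}. odd k \<and> c k \<noteq> 0")
  case True
  then obtain k m where k: "k \<in> {1..n}" "odd k" "c k = Suc m"
    by (metis not0_implies_Suc)
  define c' where "c' = c(k := m)"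
  have "(\<Sum>k'\<in>{1..n}. c' k' * k') + k = c' k * k + k + (\<Sum>k'\<in>{1..n} - {k}. c' k' * k')"
    using k(1) sum.remove[of "{1..n}" k "\<lambda>k'. c' k' * k'"] by (simp add: algebra_simps)
  also have "\<dots> = c k * k + (\<Sum>k'\<in>{1..n} - {k}. c k' * k')"
    using k(3) by (simp add: c'_def)
  also have "\<dots> = D"
    using k(1) sum.remove[of "{1..n}" k "\<lambda>k'. c k' * k'"] unfolding D by simp
  finally have "(\<Sum>k'\<in>{1..n}. c' k' * k') < D"
    using k(1) by simp
  then have "elem_sym_prod n c' \<in> Rodd_span n"
    by (rule IH[OF _ Rsym_elem_sym_prod degree_le_if_homogeneous[OF homogeneous_elem_sym_prod order_refl]])
  then show ?thesis
    unfolding c'_def elem_sym_prod_split[where c = c, OF k(1,3)] using Rodd_elem_sym[OF k(2)] by (rule Rodd_span_mult[rotated])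
next
  case False
  then have "elem_sym_prod n c \<in> span_h_odd n"
    by (intro elem_sym_prod_in_span_h_odd) auto
  with IH have "homog_part D (elem_sym_prod n c) \<in> Rodd_span n"
    by (rule homog_part_span_h_odd_in_Rodd_span)
  then show ?thesis
    using homog_part_homogeneous[OF homogeneous_elem_sym_prod] D by simp
qed

lemma lex_lead_elem_sym_prod_elem_exponents:
  assumes "p \<in> Rsym n" "lex_lead p \<alpha> c"
  shows "lex_lead (elem_sym_prod n (elem_exponents \<alpha>)) \<alpha> 1"
proof -
  have vars: "keys \<alpha> \<subseteq> {..<n}"
    using assms by (auto simp: Rsym_iff in_vars_def lex_lead_def in_keys_iff)
  have "lookup \<alpha> (Suc i) \<le> lookup \<alpha> i" for i
  proof (cases "Suc i < n")
    case True
    then show ?thesis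
      using assms lex_lead_symmetric_antimono by (auto simp: Rsym_iff)
  next
    case False
    then have "Suc i \<notin> keys \<alpha>"
      using vars by auto
    then show ?thesis
      by (simp add: in_keys_iff)
  qed
  then show ?thesis
    using lex_lead_elem_sym_prod[of n "elem_exponents \<alpha>"] sum_elem_exponents[OF vars] by simp
qed

lemma keys_diff_lex_lead_less:
  assumes "lex_lead p \<alpha> c" "lex_lead q \<alpha> 1" "\<gamma> \<in> keys (p - Const c * q)"
  shows "\<gamma> < \<alpha>"
proof -
  have "\<gamma> \<in> keys p \<or> \<gamma> \<in> keys q"
    using assms(3) by (auto simp: in_keys_iff lookup_minus lookup_Const_mult)
  then have "\<gamma> \<le> \<alpha>"
    using assms(1,2) by (auto simp: lex_lead_def)
  moreover have "\<gamma> \<noteq> \<alpha>"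
    using assms by (auto simp: lex_lead_def in_keys_iff lookup_minus lookup_Const_mult)
  ultimately show ?thesis
    by simp
qed

lemma lex_lead_reduction:
  assumes IH: "\<And>D' r. D' < D \<Longrightarrow> r \<in> Rsym n \<Longrightarrow> degree_le D' r \<Longrightarrow> r \<in> Rodd_span n"
    and p: "p \<in> Rsym n" "degree_le D p" and lead: "lex_lead p \<alpha> c"
  obtains q where "q \<in> Rodd_span n" "p - Const c * q \<in> Rsym n" "degree_le D (p - Const c * q)"
    "\<forall>\<gamma>\<in>keys (p - Const c * q). \<gamma> < \<alpha>"
proof
  define q where "q = elem_sym_prod n (elem_exponents \<alpha>)"
  have q_lead: "lex_lead q \<alpha> 1"
    unfolding q_def using p(1) lead by (rule lex_lead_elem_sym_prod_elem_exponents)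
  then have "\<alpha> \<in> keys q"
    by (simp add: lex_lead_def in_keys_iff)
  then have deg: "deg_monom \<alpha> = (\<Sum>k\<in>{1..n}. elem_exponents \<alpha> k * k)"
    using homogeneous_elem_sym_prod by (simp add: q_def homogeneous_def)
  have "deg_monom \<alpha> \<le> D"
    using p(2) lead by (simp add: degree_le_def lex_lead_def in_keys_iff)
  then have "r \<in> Rodd_span n" if "D' < deg_monom \<alpha>" "r \<in> Rsym n" "degree_le D' r" for D' r
    using IH[of D' r] that by simp
  then show "q \<in> Rodd_span n"
    unfolding q_def using deg by (rule elem_sym_prod_in_Rodd_span)
  show "p - Const c * q \<in> Rsym n"
    unfolding q_def using p(1) by (intro Rsym_diff Rsym_mult Rsym_Const Rsym_elem_sym_prod)
  have "homogeneous (deg_monom \<alpha>) q"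
    unfolding q_def deg by (rule homogeneous_elem_sym_prod)
  then show "degree_le D (p - Const c * q)"
    using \<open>deg_monom \<alpha> \<le> D\<close>
    by (intro degree_le_diff p(2) degree_le_Const_mult degree_le_if_homogeneous)
  show "\<forall>\<gamma>\<in>keys (p - Const c * q). \<gamma> < \<alpha>"
    using keys_diff_lex_lead_less[OF lead q_lead] by blast
qed

text \<open>Induction on the leading monomial, which for bounded degree ranges over a finite set.\<close>

lemma Rsym_in_Rodd_span_degree_le:
  assumes IH: "\<And>D' r. D' < D \<Longrightarrow> r \<in> Rsym n \<Longrightarrow> degree_le D' r \<Longrightarrow> r \<in> Rodd_span n"
    and "p \<in> Rsym n" "degree_le D p"
  shows "p \<in> Rodd_span n"
proof -
  define M where "M = {\<gamma>::monom. keys \<gamma> \<subseteq> {..<n} \<and> deg_monom \<gamma> \<le> D}"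
  have "finite M"
    unfolding M_def by (rule finite_bounded_degree_monoms) simp
  show ?thesis
    using assms(2,3)
  proof (induction p rule: measure_induct_rule[where f = "\<lambda>p. card {\<gamma> \<in> M. \<gamma> \<le> Max (keys p)}"])
    case (less p)
    show ?case
    proof (cases "p = 0")
      case False
      define \<alpha> where "\<alpha> = Max (keys p)"
      have "\<alpha> \<in> keys p"
        using False unfolding \<alpha>_def by (intro Max_in) auto
      then have "\<alpha> \<in> M"
        using less.prems by (auto simp: M_def Rsym_iff in_vars_def degree_le_def)
      have lead: "lex_lead p \<alpha> (lookup p \<alpha>)"
        using \<open>\<alpha> \<in> keys p\<close> by (simp add: lex_lead_def in_keys_iff \<alpha>_def)
      obtain q where q: "q \<in> Rodd_span n"
        and p': "p - Const (lookup p \<alpha>) * q \<in> Rsym n" "degree_le D (p - Const (lookup p \<alpha>) * q)"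
          "\<forall>\<gamma>\<in>keys (p - Const (lookup p \<alpha>) * q). \<gamma> < \<alpha>"
        by (rule lex_lead_reduction[OF IH less.prems lead])
      define p' where "p' = p - Const (lookup p \<alpha>) * q"
      have "p' \<in> Rodd_span n"
      proof (cases "p' = 0")
        case False
        then have "Max (keys p') < \<alpha>"
          unfolding p'_def by (intro p'(3)[rule_format] Max_in) auto
        then have "{\<gamma> \<in> M. \<gamma> \<le> Max (keys p')} \<subset> {\<gamma> \<in> M. \<gamma> \<le> \<alpha>}"
          using \<open>\<alpha> \<in> M\<close> by (auto simp: psubset_eq dest: order.trans[OF _ less_imp_le] leD)
        then have "card {\<gamma> \<in> M. \<gamma> \<le> Max (keys p')} < card {\<gamma> \<in> M. \<gamma> \<le> Max (keys p)}"
          using \<open>finite M\<close> unfolding \<alpha>_def by (intro psubset_card_mono) auto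
        then show ?thesis
          using p'(1,2) unfolding p'_def by (rule less.IH)
      qed (simp add: module_span_zero)
      then have "p' + Const (lookup p \<alpha>) * q \<in> Rodd_span n"
        using q by (intro module_span_add Rodd_span_mult Rodd_Const)
      then show ?thesis
        by (simp add: p'_def)
    qed (simp add: module_span_zero)
  qed
qed

lemma Rsym_subset_Rodd_span: "Rsym n \<subseteq> Rodd_span n"
proof -
  have "p \<in> Rodd_span n" if "p \<in> Rsym n" "degree_le D p" for D p
    using that
  proof (induction D arbitrary: p rule: less_induct)
    case (less D)
    show ?case
      using less.IH less.prems by (rule Rsym_in_Rodd_span_degree_le)
  qed
  moreover have "degree_le (Max (insert 0 (deg_monom ` keys p))) p" for p
    unfolding degree_le_def by (auto intro: Max_ge)
  ultimately show ?thesis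
    by blast
qed

theorem mainTheorem6:
  fixes n :: nat
  assumes "n \<ge> 1"
  shows "Rsym n = module_span (Rodd n)
           {(\<Prod>j<n div 2. compl_sym n (i j)) | i :: nat \<Rightarrow> nat. True}"
proof -
  have "Rsym n = Rodd_span n"
    using Rsym_subset_Rodd_span module_span_subset_Rsym[OF Rodd_subset_Rsym h_products_subset_Rsym]
    by (rule equalityI)
  then show ?thesis
    by (simp only: h_products_def)
qed

end
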